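(* Let $\alpha>0$, let $\{Y_t:t\in\mathbb{Z}\}$ be an $\mathbb{R}^d$-valued process and let $\{M_t:t\in\mathbb{Z}\}$ be an $\mathbb{R}^d$-valued back-and-forth tail chain with index $\alpha$. Suppose $\mathcal{L}(Y_0,\dots,Y_t)=\mathcal{L}(M_0,\dots,M_t)$ for all $t\ge0$, and that $$\mathbb{E}[f(Y_{-s},\dots,Y_t)]=\mathbb{E}\Big[f\Big(\tfrac{Y_0}{\|Y_s\|},\dots,\tfrac{Y_{s+t}}{\|Y_s\|}\Big)\|Y_s\|^\alpha\mathbf{1}_{\{Y_s\ne0\}}\Big]$$ for all $s,t\ge0$ and all bounded measurable $f:(\mathbb{R}^d)^{s+t+1}\to\mathbb{R}$ with $f(y_{-s},\dots,y_t)=0$ whenever $y_{-s}=0$. Then $\mathcal{L}(Y_{-s},\dots,Y_t)=\mathcal{L}(M_{-s},\dots,M_t)$ for all $s,t\ge0$.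
   Context: $\|\cdot\|$ is the Euclidean norm and $\mathbb{S}^{d-1}$ the unit sphere in $\mathbb{R}^d$. $\mathcal{M}_\alpha$ is the set of probability measures $P$ on $\mathbb{S}^{d-1}\times\mathbb{R}^d$ with $\int_{\mathbb{S}^{d-1}\times(\mathbb{R}^d\setminus\{0\})}\mathbf{1}_S(m/\|m\|)\|m\|^\alpha P(ds,dm)\le P(S\times\mathbb{R}^d)$ for every Borel $S\subset\mathbb{S}^{d-1}$; for $P\in\mathcal{M}_\alpha$ the adjoint $P^*$ is given by $P^*(S\times\{0\})=P(S\times\mathbb{R}^d)-\int_{\mathbb{S}^{d-1}\times(\mathbb{R}^d\setminus\{0\})}\mathbf{1}_S(m/\|m\|)\|m\|^\alpha P(ds,dm)$ for Borel $S\subset\mathbb{S}^{d-1}$ and $P^*(E)=\int_{\mathbb{S}^{d-1}\times(\mathbb{R}^d\setminus\{0\})}\mathbf{1}_E(m/\|m\|,s/\|m\|)\|m\|^\alpha P(ds,dm)$ for Borel $E\subset\mathbb{S}^{d-1}\times(\mathbb{R}^d\setminus\{0\})$. An $\mathbb{R}^d$-valued process $\{M_t:t\in\mathbb{Z}\}$ is a back-and-forth tail chain with index $\alpha$ if: (i) $\mathcal{L}(M_0,M_1)$ and $\mathcal{L}(M_0,M_{-1})$ belong to $\mathcal{M}_\alpha$ and are adjoint to each other; (ii) $\{M_t:t\ge0\}$ is a Markov chain with respect to the filtration $\sigma(M_s,-\infty<s\le t)$, $t\ge0$, with kernel $\Pr(M_t\in\cdot\mid M_{t-1}=x)=\delta_0(\cdot)$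 if $x=0$ and $=\Pr(\|x\|M_1\in\cdot\mid M_0=x/\|x\|)$ if $x\ne0$; (iii) $\{M_{-t}:t\ge0\}$ is a Markov chain with respect to the filtration $\sigma(M_{-s},-\infty<s\le t)$, $t\ge0$, with kernel $\Pr(M_{-t}\in\cdot\mid M_{-t+1}=x)=\delta_0(\cdot)$ if $x=0$ and $=\Pr(\|x\|M_{-1}\in\cdot\mid M_0=x/\|x\|)$ if $x\ne0$. *)

theory Defs
  imports "HOL-Probability.Probability"
begin

text \<open>The unit sphere S^{d-1} is sphere 0 1 in the euclidean space 'd. A measure on
  S^{d-1} x R^d is rendered as a probability measure on the Borel sets of 'd x 'd that
  is concentrated on sphere 0 1 x UNIV.\<close>

definition in_M_alpha :: "real \<Rightarrow> ('d::euclidean_space \<times> 'd) measure \<Rightarrow> bool" where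
  "in_M_alpha \<alpha> P \<longleftrightarrow>
     prob_space P \<and> sets P = sets borel \<and> emeasure P (sphere 0 1 \<times> UNIV) = 1 \<and>
     (\<forall>S \<in> sets borel. S \<subseteq> sphere 0 1 \<longrightarrow>
        (\<integral>\<^sup>+ sm. indicator (sphere 0 1 \<times> (UNIV - {0})) sm
                  * indicator S (snd sm /\<^sub>R norm (snd sm))
                  * ennreal (norm (snd sm) powr \<alpha>) \<partial>P)
        \<le> emeasure P (S \<times> UNIV))"

definition is_adjoint :: "real \<Rightarrow> ('d::euclidean_space \<times> 'd) measure \<Rightarrow> ('d \<times> 'd) measure \<Rightarrow> bool" where
  "is_adjoint \<alpha> P Q \<longleftrightarrow>
     (\<forall>S \<in> sets borel. S \<subseteq> sphere 0 1 \<longrightarrow>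
        emeasure Q (S \<times> {0}) =
          emeasure P (S \<times> UNIV)
          - (\<integral>\<^sup>+ sm. indicator (sphere 0 1 \<times> (UNIV - {0})) sm
                  * indicator S (snd sm /\<^sub>R norm (snd sm))
                  * ennreal (norm (snd sm) powr \<alpha>) \<partial>P)) \<and>
     (\<forall>E \<in> sets borel. E \<subseteq> sphere 0 1 \<times> (UNIV - {0}) \<longrightarrow>
        emeasure Q E =
          (\<integral>\<^sup>+ sm. indicator (sphere 0 1 \<times> (UNIV - {0})) sm
                  * indicator E (snd sm /\<^sub>R norm (snd sm), fst sm /\<^sub>R norm (snd sm))
                  * ennreal (norm (snd sm) powr \<alpha>) \<partial>P))"

definition cond_law_kernel ::
  "'a measure \<Rightarrow> ('a \<Rightarrow> 'd::euclidean_space) \<Rightarrow> ('a \<Rightarrow> 'd) \<Rightarrow> ('d \<Rightarrow> 'd measure) \<Rightarrow> bool" where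
  "cond_law_kernel \<Omega> X Z \<kappa> \<longleftrightarrow>
     \<kappa> \<in> borel \<rightarrow>\<^sub>M prob_algebra borel \<and>
     (\<forall>A \<in> sets borel. \<forall>B \<in> sets borel.
        measure \<Omega> {\<omega> \<in> space \<Omega>. X \<omega> \<in> A \<and> Z \<omega> \<in> B}
        = (\<integral>u. indicator A u * measure (\<kappa> u) B \<partial>distr \<Omega> borel X))"

definition tail_kernel :: "('d::euclidean_space \<Rightarrow> 'd measure) \<Rightarrow> 'd \<Rightarrow> 'd measure" where
  "tail_kernel \<kappa> x =
     (if x = 0 then return borel 0 else distr (\<kappa> (x /\<^sub>R norm x)) borel (\<lambda>y. norm x *\<^sub>R y))"

definition gen_sigma :: "'a measure \<Rightarrow> (int \<Rightarrow> 'a \<Rightarrow> 'd::euclidean_space) \<Rightarrow> int set \<Rightarrow> 'a measure" where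
  "gen_sigma \<Omega> X I = sigma (space \<Omega>) (\<Union>u\<in>I. {X u -` B \<inter> space \<Omega> | B. B \<in> sets borel})"

definition back_and_forth_tail_chain ::
  "real \<Rightarrow> 'a measure \<Rightarrow> (int \<Rightarrow> 'a \<Rightarrow> 'd::euclidean_space) \<Rightarrow> bool" where
  "back_and_forth_tail_chain \<alpha> \<Omega> M \<longleftrightarrow>
     (\<forall>t. M t \<in> borel_measurable \<Omega>) \<and>
     (let P = distr \<Omega> borel (\<lambda>\<omega>. (M 0 \<omega>, M 1 \<omega>));
          Q = distr \<Omega> borel (\<lambda>\<omega>. (M 0 \<omega>, M (-1) \<omega>))
      in in_M_alpha \<alpha> P \<and> in_M_alpha \<alpha> Q \<and> is_adjoint \<alpha> P Q \<and> is_adjoint \<alpha> Q P) \<and>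
     (\<exists>\<kappa>. cond_law_kernel \<Omega> (M 0) (M 1) \<kappa> \<and>
        (\<forall>t::int \<ge> 1. \<forall>B \<in> sets borel. AE \<omega> in \<Omega>.
           real_cond_exp \<Omega> (gen_sigma \<Omega> M {..t - 1}) (\<lambda>\<omega>. indicator B (M t \<omega>)) \<omega>
           = measure (tail_kernel \<kappa> (M (t - 1) \<omega>)) B)) \<and>
     (\<exists>\<kappa>. cond_law_kernel \<Omega> (M 0) (M (-1)) \<kappa> \<and>
        (\<forall>t::int \<ge> 1. \<forall>B \<in> sets borel. AE \<omega> in \<Omega>.
           real_cond_exp \<Omega> (gen_sigma \<Omega> M {-(t - 1)..}) (\<lambda>\<omega>. indicator B (M (-t) \<omega>)) \<omega>
           = measure (tail_kernel \<kappa> (M (-t + 1) \<omega>)) B))"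

end

theory Submission
  imports Defs
begin

text \<open>Both processes satisfy the time change formula: for Y it is a hypothesis, and for the
  tail chain M it is proved by induction on the window. The window {-1, 0} is the adjointness
  of the laws of (M 0, M 1) and (M 0, M (-1)); a window is extended to the right by the forward
  kernel and to the left by the backward kernel, and the homogeneity of the tail kernel makes
  each such step commute with the rescaling by norm (M s). The law of (Y (-s), ..., Y t) is then
  identified by induction on s: on the event Y (-s) \<noteq> 0 the time change formula expresses
  it through the law of (Y 0, ..., Y (s + t)), which is that of M, and on Y (-s) = 0 it is
  determined by the law of (Y (-s + 1), ..., Y t).\<close>

section \<open>Markov transitions of a process\<close>

lemma gen_sigma_generators_subset:
  assumes "\<And>i. X i \<in> borel_measurable \<Omega>"
  shows "(\<Union>u\<in>I. {X u -` B \<inter> space \<Omega> | B. B \<in> sets borel}) \<subseteq> sets \<Omega>"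
  using assms by (auto simp: measurable_def)

lemma subalgebra_gen_sigma:
  assumes "\<And>i. X i \<in> borel_measurable \<Omega>"
  shows "subalgebra \<Omega> (gen_sigma \<Omega> X I)"
proof -
  note G = gen_sigma_generators_subset[OF assms, where I=I]
  then have "(\<Union>u\<in>I. {X u -` B \<inter> space \<Omega> | B. B \<in> sets borel}) \<subseteq> Pow (space \<Omega>)"
    using sets.sets_into_space by blast
  with G show ?thesis
    unfolding subalgebra_def gen_sigma_def
    by (simp add: sets.sigma_sets_subset)
qed

lemma measurable_gen_sigma:
  assumes "\<And>i. X i \<in> borel_measurable \<Omega>" and "i \<in> I"
  shows "X i \<in> borel_measurable (gen_sigma \<Omega> X I)"
proof (rule measurableI)
  fix B :: "'b set" assume B: "B \<in> sets borel"
  have "(\<Union>u\<in>I. {X u -` B \<inter> space \<Omega> | B. B \<in> sets borel}) \<subseteq> Pow (space \<Omega>)"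
    using gen_sigma_generators_subset[OF assms(1), where I=I] sets.sets_into_space by blast
  moreover have "X i -` B \<inter> space \<Omega> \<in> (\<Union>u\<in>I. {X u -` B \<inter> space \<Omega> | B. B \<in> sets borel})"
    using B assms(2) by blast
  ultimately show "X i -` B \<inter> space (gen_sigma \<Omega> X I) \<in> sets (gen_sigma \<Omega> X I)"
    unfolding gen_sigma_def by simp
qed simp

lemma measurable_fun_upd_PiM:
  fixes j :: 'i
  shows "(\<lambda>p. (fst p)(j := snd p))
     \<in> PiM L (\<lambda>_. borel) \<Otimes>\<^sub>M (borel::'d::topological_space measure) \<rightarrow>\<^sub>M PiM (insert j L) (\<lambda>_. borel)"
proof -
  have "(\<lambda>p i. if i = j then snd p else fst p i)
      \<in> PiM L (\<lambda>_. borel) \<Otimes>\<^sub>M (borel::'d measure) \<rightarrow>\<^sub>M PiM (insert j L) (\<lambda>_. borel)"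
  proof (rule measurable_PiM_single')
    fix i assume "i \<in> insert j L"
    then show "(\<lambda>p. if i = j then snd p else fst p i) \<in> PiM L (\<lambda>_. borel) \<Otimes>\<^sub>M (borel::'d measure) \<rightarrow>\<^sub>M borel"
      by (cases "i = j") (auto intro!: measurable_compose[OF measurable_fst measurable_component_singleton])
  qed (auto simp: space_pair_measure space_PiM PiE_def extensional_def)
  moreover have "(\<lambda>p i. if i = j then snd p else fst p i) = (\<lambda>p::('i \<Rightarrow> 'd) \<times> 'd. (fst p)(j := snd p))"
    by (auto simp: fun_eq_iff)
  ultimately show ?thesis by simp
qed

lemma measurable_fun_upd_PiM_single:
  assumes "w \<in> space (PiM L (\<lambda>_. borel))"
  shows "(\<lambda>y. w(j := y)) \<in> (borel::'d::topological_space measure) \<rightarrow>\<^sub>M PiM (insert j L) (\<lambda>_. borel)"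
  using measurable_compose[OF measurable_Pair[OF measurable_const[OF assms] measurable_ident_sets[OF refl]]
      measurable_fun_upd_PiM[where L=L and j=j]]
  by simp

lemma measurable_nn_integral_kernel_fun_upd:
  assumes F: "F \<in> borel_measurable (PiM (insert j L) (\<lambda>_. (borel::'d::topological_space measure)))"
    and K: "K \<in> borel \<rightarrow>\<^sub>M subprob_algebra (borel::'d measure)" and k: "k \<in> L"
  shows "(\<lambda>w. \<integral>\<^sup>+y. F (w(j := y)) \<partial>K (w k)) \<in> borel_measurable (PiM L (\<lambda>_. borel))"
proof (rule nn_integral_measurable_subprob_algebra2)
  show "(\<lambda>(w, y). F (w(j := y))) \<in> borel_measurable (PiM L (\<lambda>_. borel) \<Otimes>\<^sub>M borel)"
    using measurable_compose[OF measurable_fun_upd_PiM[where L=L and j=j] F] by (simp add: case_prod_beta')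
  show "(\<lambda>w. K (w k)) \<in> PiM L (\<lambda>_. borel) \<rightarrow>\<^sub>M subprob_algebra borel"
    using measurable_compose[OF measurable_component_singleton[OF k] K] by simp
qed

lemma nn_integral_mult_indicator_cond_kernel:
  assumes "prob_space \<Omega>" and Xm: "\<And>i. X i \<in> borel_measurable \<Omega>"
    and K: "K \<in> borel \<rightarrow>\<^sub>M subprob_algebra borel" and B: "B \<in> sets borel"
    and cond: "AE \<omega> in \<Omega>. real_cond_exp \<Omega> (gen_sigma \<Omega> X I) (\<lambda>\<omega>. indicator B (X j \<omega>)) \<omega>
                 = measure (K (X j0 \<omega>)) B"
    and g: "g \<in> borel_measurable (gen_sigma \<Omega> X I)" "\<And>\<omega>. 0 \<le> g \<omega> \<and> g \<omega> \<le> 1"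
  shows "(\<integral>\<^sup>+\<omega>. ennreal (g \<omega> * indicator B (X j \<omega>)) \<partial>\<Omega>)
       = (\<integral>\<^sup>+\<omega>. ennreal (g \<omega>) * emeasure (K (X j0 \<omega>)) B \<partial>\<Omega>)"
proof -
  interpret prob_space \<Omega> by fact
  have sub: "subalgebra \<Omega> (gen_sigma \<Omega> X I)" by (rule subalgebra_gen_sigma[OF Xm])
  interpret finite_measure_subalgebra \<Omega> "gen_sigma \<Omega> X I"
    by unfold_locales (rule sub)
  have gm: "g \<in> borel_measurable \<Omega>" by (rule measurable_from_subalg[OF sub g(1)])
  have indm: "(\<lambda>\<omega>. indicator B (X j \<omega>) :: real) \<in> borel_measurable \<Omega>"
    using B Xm by measurable
  have Km: "(\<lambda>\<omega>. measure (K (X j0 \<omega>)) B) \<in> borel_measurable \<Omega>"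
    using measurable_compose[OF measurable_compose[OF Xm K] measurable_measure_subprob_algebra[OF B]] by simp
  have K_finite: "finite_measure (K x)" and K_le: "measure (K x) B \<le> 1" for x
    using measurable_space[OF K, of x]
    by (simp_all add: space_subprob_algebra subprob_space_def subprob_space.subprob_measure_le_1)
  have int_indicator: "integrable \<Omega> (\<lambda>\<omega>. g \<omega> * indicator B (X j \<omega>))"
    using g(2) by (intro integrable_const_bound[where B=1] borel_measurable_times gm indm)
      (auto simp: indicator_def abs_mult)
  have int_kernel: "integrable \<Omega> (\<lambda>\<omega>. g \<omega> * measure (K (X j0 \<omega>)) B)"
    using g(2) K_le by (intro integrable_const_bound[where B=1] borel_measurable_times gm Km)
      (auto simp: abs_mult intro!: mult_le_one)
  have "(\<integral>\<^sup>+\<omega>. ennreal (g \<omega> * indicator B (X j \<omega>)) \<partial>\<Omega>) = ennreal (\<integral>\<omega>. g \<omega> * indicator B (X j \<omega>) \<partial>\<Omega>)"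
    using int_indicator g(2) by (intro nn_integral_eq_integral) auto
  also have "(\<integral>\<omega>. g \<omega> * indicator B (X j \<omega>) \<partial>\<Omega>)
      = (\<integral>\<omega>. g \<omega> * real_cond_exp \<Omega> (gen_sigma \<Omega> X I) (\<lambda>\<omega>. indicator B (X j \<omega>)) \<omega> \<partial>\<Omega>)"
    using real_cond_exp_intg(2)[OF int_indicator g(1) indm] by simp
  also have "\<dots> = (\<integral>\<omega>. g \<omega> * measure (K (X j0 \<omega>)) B \<partial>\<Omega>)"
    using cond by (intro integral_cong_AE)
      (auto intro!: gm Km borel_measurable_times borel_measurable_cond_exp2)
  also have "ennreal \<dots> = (\<integral>\<^sup>+\<omega>. ennreal (g \<omega> * measure (K (X j0 \<omega>)) B) \<partial>\<Omega>)"
    using int_kernel g(2) by (intro nn_integral_eq_integral[symmetric]) auto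
  also have "\<dots> = (\<integral>\<^sup>+\<omega>. ennreal (g \<omega>) * emeasure (K (X j0 \<omega>)) B \<partial>\<Omega>)"
    using g(2) by (intro nn_integral_cong) (simp add: ennreal_mult finite_measure.emeasure_eq_measure[OF K_finite])
  finally show ?thesis .
qed

definition markov_transition ::
  "'a measure \<Rightarrow> (int \<Rightarrow> 'a \<Rightarrow> 'd::euclidean_space) \<Rightarrow> ('d \<Rightarrow> 'd measure) \<Rightarrow> int set \<Rightarrow> int \<Rightarrow> int \<Rightarrow> bool"
  where
  "markov_transition \<Omega> X K J j j0 \<longleftrightarrow>
     (\<forall>F \<in> borel_measurable (PiM (insert j J) (\<lambda>_. borel)).
        (\<integral>\<^sup>+\<omega>. F (\<lambda>i\<in>insert j J. X i \<omega>) \<partial>\<Omega>)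
        = (\<integral>\<^sup>+\<omega>. \<integral>\<^sup>+y. F ((\<lambda>i\<in>J. X i \<omega>)(j := y)) \<partial>K (X j0 \<omega>) \<partial>\<Omega>))"

lemma measurable_kernel_fun_upd:
  fixes X :: "int \<Rightarrow> 'a \<Rightarrow> 'd::euclidean_space"
  assumes Xm: "\<And>i. X i \<in> borel_measurable \<Omega>" and K: "K \<in> borel \<rightarrow>\<^sub>M subprob_algebra borel"
  shows "(\<lambda>\<omega>. distr (K (X j0 \<omega>)) (PiM (insert j J) (\<lambda>_. borel)) (\<lambda>y. (\<lambda>i\<in>J. X i \<omega>)(j := y)))
      \<in> \<Omega> \<rightarrow>\<^sub>M subprob_algebra (PiM (insert j J) (\<lambda>_. borel))"
proof (rule measurable_distr2[OF _ measurable_compose[OF Xm K]])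
  have "(\<lambda>p. (\<lambda>i\<in>J. X i (fst p), snd p)) \<in> \<Omega> \<Otimes>\<^sub>M borel \<rightarrow>\<^sub>M PiM J (\<lambda>_. borel) \<Otimes>\<^sub>M borel"
    by (intro measurable_Pair measurable_restrict measurable_compose[OF measurable_fst Xm] measurable_snd)
  from measurable_compose[OF this measurable_fun_upd_PiM]
  show "(\<lambda>(\<omega>, y). (\<lambda>i\<in>J. X i \<omega>)(j := y)) \<in> \<Omega> \<Otimes>\<^sub>M borel \<rightarrow>\<^sub>M PiM (insert j J) (\<lambda>_. borel)"
    by (simp add: case_prod_beta')
qed

lemma measurable_fun_upd_kernel:
  assumes "K \<in> borel \<rightarrow>\<^sub>M subprob_algebra (borel::'d::euclidean_space measure)"
  shows "(\<lambda>y. (\<lambda>i\<in>J. w i)(j := y)) \<in> K x \<rightarrow>\<^sub>M PiM (insert j J) (\<lambda>_. (borel::'d measure))"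
proof -
  have sets: "sets (K x) = sets borel"
    using subprob_measurableD(2)[OF assms, of x] by simp
  show ?thesis
    unfolding measurable_cong_sets[OF sets refl]
    by (rule measurable_fun_upd_PiM_single) (simp add: space_PiM)
qed

lemma emeasure_window_rectangle:
  fixes X :: "int \<Rightarrow> 'a \<Rightarrow> 'd::euclidean_space"
  assumes "prob_space \<Omega>" and Xm: "\<And>i. X i \<in> borel_measurable \<Omega>"
    and J: "finite J" "J \<subseteq> I" "j \<notin> J"
    and K: "K \<in> borel \<rightarrow>\<^sub>M subprob_algebra borel"
    and cond: "\<forall>B\<in>sets borel. AE \<omega> in \<Omega>.
        real_cond_exp \<Omega> (gen_sigma \<Omega> X I) (\<lambda>\<omega>. indicator B (X j \<omega>)) \<omega> = measure (K (X j0 \<omega>)) B"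
    and A: "\<And>i. i \<in> insert j J \<Longrightarrow> A i \<in> sets borel"
  shows "emeasure (distr \<Omega> (PiM (insert j J) (\<lambda>_. borel)) (\<lambda>\<omega>. \<lambda>i\<in>insert j J. X i \<omega>)) (Pi\<^sub>E (insert j J) A)
       = (\<integral>\<^sup>+\<omega>. indicator {\<omega>. \<forall>i\<in>J. X i \<omega> \<in> A i} \<omega> * emeasure (K (X j0 \<omega>)) (A j) \<partial>\<Omega>)"
proof -
  define W where "W = (\<lambda>\<omega>. \<lambda>i\<in>insert j J. X i \<omega>)"
  define g where "g = (\<lambda>\<omega>. indicator {\<omega>. \<forall>i\<in>J. X i \<omega> \<in> A i} \<omega> :: real)"
  have W: "W \<in> \<Omega> \<rightarrow>\<^sub>M PiM (insert j J) (\<lambda>_. borel)"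
    unfolding W_def by (intro measurable_restrict Xm)
  have AL: "Pi\<^sub>E (insert j J) A \<in> sets (PiM (insert j J) (\<lambda>_. borel))"
    using A J by (intro sets_PiM_I_finite) auto
  have "g = (\<lambda>\<omega>. \<Prod>i\<in>J. indicator (A i) (X i \<omega>))"
    unfolding g_def using J by (auto simp: fun_eq_iff indicator_def)
  then have gm: "g \<in> borel_measurable (gen_sigma \<Omega> X I)"
    using A J by (auto intro!: borel_measurable_prod measurable_compose[OF measurable_gen_sigma[OF Xm]])
  have "indicator (W -` Pi\<^sub>E (insert j J) A \<inter> space \<Omega>) \<omega> = ennreal (g \<omega> * indicator (A j) (X j \<omega>))"
    if "\<omega> \<in> space \<Omega>" for \<omega>
    using that by (auto simp: g_def W_def indicator_def PiE_def Pi_iff)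
  then have "emeasure (distr \<Omega> (PiM (insert j J) (\<lambda>_. borel)) W) (Pi\<^sub>E (insert j J) A)
      = (\<integral>\<^sup>+\<omega>. ennreal (g \<omega> * indicator (A j) (X j \<omega>)) \<partial>\<Omega>)"
    using measurable_sets[OF W AL]
    by (simp add: emeasure_distr[OF W AL] nn_integral_indicator[symmetric] cong: nn_integral_cong)
  also have "\<dots> = (\<integral>\<^sup>+\<omega>. ennreal (g \<omega>) * emeasure (K (X j0 \<omega>)) (A j) \<partial>\<Omega>)"
    using cond A by (intro nn_integral_mult_indicator_cond_kernel[OF assms(1) Xm K _ _ gm]) (auto simp: g_def)
  finally show ?thesis by (simp add: W_def g_def ennreal_indicator)
qed

lemma distr_window_insert_eq_bind:
  fixes X :: "int \<Rightarrow> 'a \<Rightarrow> 'd::euclidean_space"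
  assumes "prob_space \<Omega>" and Xm: "\<And>i. X i \<in> borel_measurable \<Omega>"
    and J: "finite J" "J \<subseteq> I" "j \<notin> J"
    and K: "K \<in> borel \<rightarrow>\<^sub>M subprob_algebra borel"
    and cond: "\<forall>B\<in>sets borel. AE \<omega> in \<Omega>.
        real_cond_exp \<Omega> (gen_sigma \<Omega> X I) (\<lambda>\<omega>. indicator B (X j \<omega>)) \<omega> = measure (K (X j0 \<omega>)) B"
  shows "distr \<Omega> (PiM (insert j J) (\<lambda>_. borel)) (\<lambda>\<omega>. \<lambda>i\<in>insert j J. X i \<omega>)
       = \<Omega> \<bind> (\<lambda>\<omega>. distr (K (X j0 \<omega>)) (PiM (insert j J) (\<lambda>_. borel)) (\<lambda>y. (\<lambda>i\<in>J. X i \<omega>)(j := y)))"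
proof -
  interpret prob_space \<Omega> by fact
  define N where
    "N = (\<lambda>\<omega>. distr (K (X j0 \<omega>)) (PiM (insert j J) (\<lambda>_. borel)) (\<lambda>y. (\<lambda>i\<in>J. X i \<omega>)(j := y)))"
  have N: "N \<in> \<Omega> \<rightarrow>\<^sub>M subprob_algebra (PiM (insert j J) (\<lambda>_. borel))"
    unfolding N_def by (rule measurable_kernel_fun_upd[OF Xm K])
  have W: "(\<lambda>\<omega>. \<lambda>i\<in>insert j J. X i \<omega>) \<in> \<Omega> \<rightarrow>\<^sub>M PiM (insert j J) (\<lambda>_. borel)"
    by (intro measurable_restrict Xm)
  have "distr \<Omega> (PiM (insert j J) (\<lambda>_. borel)) (\<lambda>\<omega>. \<lambda>i\<in>insert j J. X i \<omega>) = \<Omega> \<bind> N"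
  proof (rule measure_eqI_PiM_finite)
    show "finite (insert j J)" using J by simp
    show "sets (\<Omega> \<bind> N) = sets (PiM (insert j J) (\<lambda>_. borel))"
      by (rule sets_bind_measurable[OF N]) (simp add: not_empty)
    show "range (\<lambda>_::nat. space (PiM (insert j J) (\<lambda>_. (borel::'d measure)))) \<subseteq> prod_algebra (insert j J) (\<lambda>_. borel)"
      using space_in_prod_algebra[of "insert j J" "\<lambda>_. borel"] by (simp add: space_PiM)
  next
    fix A assume A: "\<And>i. i \<in> insert j J \<Longrightarrow> A i \<in> sets (borel::'d measure)"
    have AL: "Pi\<^sub>E (insert j J) A \<in> sets (PiM (insert j J) (\<lambda>_. borel))"
      using A J by (intro sets_PiM_I_finite) auto
    have "(\<lambda>y. (\<lambda>i\<in>J. X i \<omega>)(j := y)) -` Pi\<^sub>E (insert j J) A \<inter> space (K (X j0 \<omega>))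
        = (if \<forall>i\<in>J. X i \<omega> \<in> A i then A j else {})" for \<omega>
      using J(3) sets_eq_imp_space_eq[OF subprob_measurableD(2)[OF K]]
      by (auto simp: PiE_def Pi_iff split: if_splits)
    then have "emeasure (N \<omega>) (Pi\<^sub>E (insert j J) A)
        = indicator {\<omega>. \<forall>i\<in>J. X i \<omega> \<in> A i} \<omega> * emeasure (K (X j0 \<omega>)) (A j)" for \<omega>
      using AL measurable_fun_upd_kernel[OF K, where w="\<lambda>i. X i \<omega>" and J=J and j=j and x="X j0 \<omega>"]
      by (simp add: N_def emeasure_distr indicator_def)
    then show "emeasure (distr \<Omega> (PiM (insert j J) (\<lambda>_. borel)) (\<lambda>\<omega>. \<lambda>i\<in>insert j J. X i \<omega>)) (Pi\<^sub>E (insert j J) A)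
        = emeasure (\<Omega> \<bind> N) (Pi\<^sub>E (insert j J) A)"
      using emeasure_window_rectangle[OF assms A] AL by (simp add: emeasure_bind[OF not_empty N])
  qed (simp_all add: emeasure_distr[OF W])
  then show ?thesis by (simp add: N_def)
qed

lemma markov_transitionI:
  fixes X :: "int \<Rightarrow> 'a \<Rightarrow> 'd::euclidean_space"
  assumes "prob_space \<Omega>" and Xm: "\<And>i. X i \<in> borel_measurable \<Omega>"
    and J: "finite J" "J \<subseteq> I" "j \<notin> J"
    and K: "K \<in> borel \<rightarrow>\<^sub>M subprob_algebra borel"
    and cond: "\<forall>B\<in>sets borel. AE \<omega> in \<Omega>.
        real_cond_exp \<Omega> (gen_sigma \<Omega> X I) (\<lambda>\<omega>. indicator B (X j \<omega>)) \<omega> = measure (K (X j0 \<omega>)) B"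
  shows "markov_transition \<Omega> X K J j j0"
  unfolding markov_transition_def
proof
  fix F :: "(int \<Rightarrow> 'd) \<Rightarrow> ennreal"
  assume F: "F \<in> borel_measurable (PiM (insert j J) (\<lambda>_. borel))"
  have W: "(\<lambda>\<omega>. \<lambda>i\<in>insert j J. X i \<omega>) \<in> \<Omega> \<rightarrow>\<^sub>M PiM (insert j J) (\<lambda>_. borel)"
    by (intro measurable_restrict Xm)
  have "(\<integral>\<^sup>+\<omega>. F (\<lambda>i\<in>insert j J. X i \<omega>) \<partial>\<Omega>)
      = (\<integral>\<^sup>+w. F w \<partial>distr \<Omega> (PiM (insert j J) (\<lambda>_. borel)) (\<lambda>\<omega>. \<lambda>i\<in>insert j J. X i \<omega>))"
    using F by (simp add: nn_integral_distr[OF W])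
  also have "\<dots> = (\<integral>\<^sup>+\<omega>. \<integral>\<^sup>+w. F w
      \<partial>distr (K (X j0 \<omega>)) (PiM (insert j J) (\<lambda>_. borel)) (\<lambda>y. (\<lambda>i\<in>J. X i \<omega>)(j := y)) \<partial>\<Omega>)"
    unfolding distr_window_insert_eq_bind[OF assms]
    by (rule nn_integral_bind[OF F measurable_kernel_fun_upd[OF Xm K]])
  also have "\<dots> = (\<integral>\<^sup>+\<omega>. \<integral>\<^sup>+y. F ((\<lambda>i\<in>J. X i \<omega>)(j := y)) \<partial>K (X j0 \<omega>) \<partial>\<Omega>)"
    using F by (intro nn_integral_cong) (simp add: nn_integral_distr[OF measurable_fun_upd_kernel[OF K]])
  finally show "(\<integral>\<^sup>+\<omega>. F (\<lambda>i\<in>insert j J. X i \<omega>) \<partial>\<Omega>)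
      = (\<integral>\<^sup>+\<omega>. \<integral>\<^sup>+y. F ((\<lambda>i\<in>J. X i \<omega>)(j := y)) \<partial>K (X j0 \<omega>) \<partial>\<Omega>)" .
qed

section \<open>The tail kernel\<close>

lemma tail_kernel_zero [simp]: "tail_kernel \<kappa> 0 = return borel 0"
  by (simp add: tail_kernel_def)

lemma nn_integral_tail_kernel_zero:
  fixes h :: "'d::euclidean_space \<Rightarrow> ennreal"
  shows "(\<integral>\<^sup>+y. h y \<partial>tail_kernel \<kappa> 0) = h 0"
proof -
  have "AE y in return borel 0. y = (0::'d)" by (subst AE_return) auto
  then have "(\<integral>\<^sup>+y. h y \<partial>return borel 0) = (\<integral>\<^sup>+y. h 0 \<partial>return borel (0::'d))"
    by (intro nn_integral_cong_AE) auto
  then show ?thesis by (simp add: prob_space.emeasure_space_1 prob_space_return)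
qed

lemma tail_kernel_measurable:
  fixes \<kappa> :: "'d::euclidean_space \<Rightarrow> 'd measure"
  assumes "\<kappa> \<in> borel \<rightarrow>\<^sub>M prob_algebra borel"
  shows "tail_kernel \<kappa> \<in> borel \<rightarrow>\<^sub>M subprob_algebra borel"
proof -
  have "return borel (0::'d) \<in> space (subprob_algebra borel)"
    by (simp add: space_subprob_algebra prob_space_return prob_space_imp_subprob_space)
  then have start: "(\<lambda>x::'d. if x = 0 then return borel 0 else \<kappa> (x /\<^sub>R norm x)) \<in> borel \<rightarrow>\<^sub>M subprob_algebra borel"
    by (intro measurable_If measurable_const measurable_compose[OF _ measurable_prob_algebraD[OF assms]]) auto
  have scale: "(\<lambda>(x::'d, y::'d). norm x *\<^sub>R y) \<in> borel \<Otimes>\<^sub>M borel \<rightarrow>\<^sub>M borel" by measurable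
  have "tail_kernel \<kappa> = (\<lambda>x. distr (if x = 0 then return borel 0 else \<kappa> (x /\<^sub>R norm x)) borel (\<lambda>y. norm x *\<^sub>R y))"
    by (simp add: fun_eq_iff tail_kernel_def distr_return)
  then show ?thesis using measurable_distr2[OF scale start] by simp
qed

lemma sets_tail_kernel:
  assumes "\<kappa> \<in> borel \<rightarrow>\<^sub>M prob_algebra borel"
  shows "sets (tail_kernel \<kappa> x) = sets borel"
  using subprob_measurableD(2)[OF tail_kernel_measurable[OF assms], of x] by simp

lemma nn_integral_tail_kernel_divide:
  fixes \<kappa> :: "'d::euclidean_space \<Rightarrow> 'd measure"
  assumes \<kappa>: "\<kappa> \<in> borel \<rightarrow>\<^sub>M prob_algebra borel" and r: "r > 0"
    and h: "h \<in> borel_measurable borel"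
  shows "(\<integral>\<^sup>+y. h y \<partial>tail_kernel \<kappa> (x /\<^sub>R r)) = (\<integral>\<^sup>+z. h (z /\<^sub>R r) \<partial>tail_kernel \<kappa> x)"
proof (cases "x = 0")
  case True
  then show ?thesis using h by (simp add: nn_integral_return)
next
  case False
  have sets: "sets (\<kappa> u) = sets borel" for u
    using subprob_measurableD(2)[OF measurable_prob_algebraD[OF \<kappa>], of u] by simp
  have distr: "integral\<^sup>N (distr (\<kappa> u) borel (\<lambda>y. c *\<^sub>R y)) g = (\<integral>\<^sup>+y. g (c *\<^sub>R y) \<partial>\<kappa> u)"
    if "g \<in> borel_measurable borel" for c u g
    using that by (intro nn_integral_distr) (simp_all add: measurable_cong_sets[OF sets refl])
  have hr: "(\<lambda>z. h (z /\<^sub>R r)) \<in> borel_measurable borel" using h by measurable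
  have xr: "x /\<^sub>R r \<noteq> 0" and dir: "(x /\<^sub>R r) /\<^sub>R norm (x /\<^sub>R r) = x /\<^sub>R norm x"
    using False r by simp_all
  have "(\<integral>\<^sup>+y. h y \<partial>tail_kernel \<kappa> (x /\<^sub>R r)) = (\<integral>\<^sup>+y. h (norm (x /\<^sub>R r) *\<^sub>R y) \<partial>\<kappa> (x /\<^sub>R norm x))"
    unfolding tail_kernel_def if_not_P[OF xr] dir by (rule distr[OF h])
  also have "\<dots> = (\<integral>\<^sup>+y. h ((norm x *\<^sub>R y) /\<^sub>R r) \<partial>\<kappa> (x /\<^sub>R norm x))"
    using r by (intro nn_integral_cong) simp
  also have "\<dots> = (\<integral>\<^sup>+z. h (z /\<^sub>R r) \<partial>tail_kernel \<kappa> x)"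
    unfolding tail_kernel_def if_not_P[OF False] by (rule distr[OF hr, symmetric])
  finally show ?thesis .
qed

section \<open>The time change formula\<close>

definition time_change_integrand ::
  "real \<Rightarrow> int \<Rightarrow> int set \<Rightarrow> ((int \<Rightarrow> 'd) \<Rightarrow> ennreal) \<Rightarrow> (int \<Rightarrow> 'd::real_normed_vector) \<Rightarrow> ennreal"
  where
  "time_change_integrand \<alpha> c L F w =
     F (\<lambda>i\<in>L. w (i + c) /\<^sub>R norm (w c)) * ennreal (norm (w c) powr \<alpha>) * indicator {w. w c \<noteq> 0} w"

lemma time_change_integrand_cong:
  assumes "w c = w' c" and "\<And>i. i \<in> L \<Longrightarrow> w (i + c) = w' (i + c)"
  shows "time_change_integrand \<alpha> c L F w = time_change_integrand \<alpha> c L F w'"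
proof -
  have "(\<lambda>i\<in>L. w (i + c) /\<^sub>R norm (w c)) = (\<lambda>i\<in>L. w' (i + c) /\<^sub>R norm (w' c))"
    using assms by (auto simp: fun_eq_iff)
  then show ?thesis using assms(1) by (simp add: time_change_integrand_def indicator_def)
qed

lemma time_change_integrand_zero: "w c = 0 \<Longrightarrow> time_change_integrand \<alpha> c L F w = 0"
  by (simp add: time_change_integrand_def)

lemma time_change_integrand_nonzero:
  "w c \<noteq> 0 \<Longrightarrow>
     time_change_integrand \<alpha> c L F w = F (\<lambda>i\<in>L. w (i + c) /\<^sub>R norm (w c)) * ennreal (norm (w c) powr \<alpha>)"
  by (simp add: time_change_integrand_def)

lemma time_change_integrand_shift:
  "time_change_integrand \<alpha> c L F (\<lambda>i. w (i + k)) = time_change_integrand \<alpha> (c + k) L F w"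
  by (simp add: time_change_integrand_def indicator_def add.assoc)

lemma time_change_integrand_divide:
  fixes w :: "int \<Rightarrow> 'd::real_normed_vector"
  assumes r: "r > 0"
  shows "time_change_integrand \<alpha> c L F (\<lambda>i. w i /\<^sub>R r) * ennreal (r powr \<alpha>)
       = time_change_integrand \<alpha> c L F w"
proof (cases "w c = 0")
  case False
  have "(\<lambda>i\<in>L. (w (i + c) /\<^sub>R r) /\<^sub>R norm (w c /\<^sub>R r)) = (\<lambda>i\<in>L. w (i + c) /\<^sub>R norm (w c))"
    using r by (auto simp: fun_eq_iff)
  moreover have "(inverse r * norm (w c)) powr \<alpha> * r powr \<alpha> = norm (w c) powr \<alpha>"
    using r by (simp add: powr_mult[symmetric] field_simps)
  then have "ennreal ((inverse r * norm (w c)) powr \<alpha>) * ennreal (r powr \<alpha>) = ennreal (norm (w c) powr \<alpha>)"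
    by (simp add: ennreal_mult'[symmetric])
  ultimately show ?thesis
    using r False by (simp add: time_change_integrand_nonzero mult.assoc)
qed (simp add: time_change_integrand_zero)

text \<open>Time changes compose like a cocycle; the hypothesis on w c is where absorption
  of 0 enters.\<close>

lemma time_change_integrand_compose:
  fixes w :: "int \<Rightarrow> 'd::real_normed_vector"
  assumes "c' \<in> K" and "\<And>i. i \<in> L \<Longrightarrow> i + c' \<in> K" and "w c = 0 \<Longrightarrow> w (c' + c) = 0"
  shows "time_change_integrand \<alpha> c K (time_change_integrand \<alpha> c' L F) w
       = time_change_integrand \<alpha> (c' + c) L F w"
proof (cases "w c = 0")
  case False
  then have r: "norm (w c) > 0" by simp
  have "time_change_integrand \<alpha> c' L F (\<lambda>i\<in>K. w (i + c) /\<^sub>R norm (w c))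
      = time_change_integrand \<alpha> c' L F (\<lambda>i. w (i + c) /\<^sub>R norm (w c))"
    using assms(1,2) by (intro time_change_integrand_cong) auto
  then show ?thesis
    using False time_change_integrand_divide[OF r, of \<alpha> c' L F "\<lambda>i. w (i + c)"]
    by (simp add: time_change_integrand_nonzero time_change_integrand_shift)
qed (use assms(3) in \<open>simp add: time_change_integrand_zero\<close>)

lemma measurable_time_change_integrand:
  assumes F: "F \<in> borel_measurable (PiM L (\<lambda>_. (borel::'d::euclidean_space measure)))"
    and "c \<in> K" and "\<And>i. i \<in> L \<Longrightarrow> i + c \<in> K"
  shows "time_change_integrand \<alpha> c L F \<in> borel_measurable (PiM K (\<lambda>_. borel))"
proof -
  have [measurable]: "(\<lambda>w. w c) \<in> PiM K (\<lambda>_. borel) \<rightarrow>\<^sub>M (borel::'d measure)"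
    using assms(2) by (rule measurable_component_singleton)
  have "(\<lambda>w. \<lambda>i\<in>L. w (i + c) /\<^sub>R norm (w c)) \<in> PiM K (\<lambda>_. borel) \<rightarrow>\<^sub>M PiM L (\<lambda>_. (borel::'d measure))"
    using assms(2,3) by (intro measurable_restrict) measurable
  moreover have "(\<lambda>w. indicator {w. w c \<noteq> 0} w :: ennreal) = (\<lambda>w. indicator (- {0::'d}) (w c))"
    by (auto simp: indicator_def fun_eq_iff)
  ultimately show ?thesis
    unfolding time_change_integrand_def using F by measurable
qed

text \<open>One step of a tail chain commutes with the time change, because the tail kernel is
  homogeneous of degree one.\<close>

lemma time_change_integrand_kernel_step:
  fixes \<kappa> :: "'d::euclidean_space \<Rightarrow> 'd measure"
  assumes \<kappa>: "\<kappa> \<in> borel \<rightarrow>\<^sub>M prob_algebra borel" and j: "j \<noteq> 0" and j0: "j0 \<in> L"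
    and F: "F \<in> borel_measurable (PiM (insert j L) (\<lambda>_. borel))"
  shows "time_change_integrand \<alpha> c L (\<lambda>v. \<integral>\<^sup>+y. F (v(j := y)) \<partial>tail_kernel \<kappa> (v j0)) w
       = (\<integral>\<^sup>+z. time_change_integrand \<alpha> c (insert j L) F (w(j + c := z)) \<partial>tail_kernel \<kappa> (w (j0 + c)))"
proof (cases "w c = 0")
  case True
  then show ?thesis using j by (simp add: time_change_integrand_zero)
next
  case False
  define r where "r = norm (w c)"
  define v where "v = (\<lambda>i\<in>L. w (i + c) /\<^sub>R r)"
  have r: "r > 0" using False by (simp add: r_def)
  have "(\<lambda>y. v(j := y)) \<in> borel \<rightarrow>\<^sub>M PiM (insert j L) (\<lambda>_. borel)"
    by (rule measurable_fun_upd_PiM_single) (simp add: v_def space_PiM)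
  then have h: "(\<lambda>y. F (v(j := y))) \<in> borel_measurable borel"
    using F by measurable
  have "time_change_integrand \<alpha> c (insert j L) F (w(j + c := z)) = F (v(j := z /\<^sub>R r)) * ennreal (r powr \<alpha>)" for z
  proof -
    have "(\<lambda>i\<in>insert j L. (w(j + c := z)) (i + c) /\<^sub>R r) = v(j := z /\<^sub>R r)"
      by (auto simp: fun_eq_iff v_def)
    then show ?thesis using False j by (simp add: time_change_integrand_nonzero r_def)
  qed
  moreover have "v j0 = w (j0 + c) /\<^sub>R r" using j0 by (simp add: v_def)
  ultimately show ?thesis
    using False nn_integral_tail_kernel_divide[OF \<kappa> r h] h
    by (simp add: time_change_integrand_nonzero r_def[symmetric] v_def[symmetric]
        nn_integral_multc measurable_cong_sets[OF sets_tail_kernel[OF \<kappa>] refl])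
qed

definition time_change_formula :: "real \<Rightarrow> 'a measure \<Rightarrow> (int \<Rightarrow> 'a \<Rightarrow> 'd::euclidean_space) \<Rightarrow> nat \<Rightarrow> nat \<Rightarrow> bool"
  where
  "time_change_formula \<alpha> \<Omega> X s t \<longleftrightarrow>
     (\<forall>F::(int \<Rightarrow> 'd) \<Rightarrow> ennreal. F \<in> borel_measurable (PiM {- int s..int t} (\<lambda>_. borel)) \<longrightarrow>
        (\<forall>y. y (- int s) = 0 \<longrightarrow> F y = 0) \<longrightarrow>
        (\<integral>\<^sup>+\<omega>. F (\<lambda>i\<in>{- int s..int t}. X i \<omega>) \<partial>\<Omega>)
        = (\<integral>\<^sup>+\<omega>. time_change_integrand \<alpha> (int s) {- int s..int t} F (\<lambda>i. X i \<omega>) \<partial>\<Omega>))"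

lemma time_change_formulaD:
  assumes "time_change_formula \<alpha> \<Omega> X s t"
    and "F \<in> borel_measurable (PiM {- int s..int t} (\<lambda>_. borel))" and "\<And>y. y (- int s) = 0 \<Longrightarrow> F y = 0"
  shows "(\<integral>\<^sup>+\<omega>. F (\<lambda>i\<in>{- int s..int t}. X i \<omega>) \<partial>\<Omega>)
       = (\<integral>\<^sup>+\<omega>. time_change_integrand \<alpha> (int s) {- int s..int t} F (\<lambda>i. X i \<omega>) \<partial>\<Omega>)"
  using assms unfolding time_change_formula_def by blast

text \<open>The inductive step for the time change formula, for a window extended at either end;
  the shifted window must admit the same Markov step.\<close>

lemma time_change_formula_step:
  fixes M :: "int \<Rightarrow> 'a \<Rightarrow> 'd::euclidean_space" and s T :: nat
  assumes \<kappa>: "\<kappa> \<in> borel \<rightarrow>\<^sub>M prob_algebra borel"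
    and tc: "time_change_formula \<alpha> \<Omega> M s T"
    and j: "j \<noteq> 0" and j0: "j0 \<in> {- int s..int T}"
    and step: "markov_transition \<Omega> M (tail_kernel \<kappa>) {- int s..int T} j j0"
    and step_shifted: "markov_transition \<Omega> M (tail_kernel \<kappa>) {0..int s + int T} (j + int s) (j0 + int s)"
    and F: "F \<in> borel_measurable (PiM (insert j {- int s..int T}) (\<lambda>_. borel))"
    and F0: "\<And>v. v (- int s) = 0 \<Longrightarrow> (\<integral>\<^sup>+y. F (v(j := y)) \<partial>tail_kernel \<kappa> (v j0)) = 0"
  shows "(\<integral>\<^sup>+\<omega>. F (\<lambda>i\<in>insert j {- int s..int T}. M i \<omega>) \<partial>\<Omega>)
       = (\<integral>\<^sup>+\<omega>. time_change_integrand \<alpha> (int s) (insert j {- int s..int T}) F (\<lambda>i. M i \<omega>) \<partial>\<Omega>)"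
proof -
  define L where "L = {- int s..int T}"
  define L' where "L' = {0..int s + int T}"
  define K where "K = tail_kernel \<kappa>"
  define F' where "F' = (\<lambda>v. \<integral>\<^sup>+y. F (v(j := y)) \<partial>K (v j0))"
  define G where "G = time_change_integrand \<alpha> (int s) (insert j L) F"
  have F': "F' \<in> borel_measurable (PiM L (\<lambda>_. borel))"
    unfolding F'_def K_def L_def using F j0
    by (intro measurable_nn_integral_kernel_fun_upd tail_kernel_measurable \<kappa>)
  have F'0: "F' y = 0" if "y (- int s) = 0" for y
    using that F0 by (simp add: F'_def K_def)
  have G: "G \<in> borel_measurable (PiM (insert (j + int s) L') (\<lambda>_. borel))"
    unfolding G_def using F by (intro measurable_time_change_integrand) (auto simp: L_def L'_def)
  have G_cong: "G ((\<lambda>i. M i \<omega>)(j + int s := z)) = G ((\<lambda>i\<in>L'. M i \<omega>)(j + int s := z))" for \<omega> z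
    unfolding G_def using j by (intro time_change_integrand_cong) (auto simp: L_def L'_def)
  have "(\<integral>\<^sup>+\<omega>. F (\<lambda>i\<in>insert j L. M i \<omega>) \<partial>\<Omega>) = (\<integral>\<^sup>+\<omega>. F' (\<lambda>i\<in>L. M i \<omega>) \<partial>\<Omega>)"
    using step F j0 by (simp add: markov_transition_def F'_def K_def L_def)
  also have "\<dots> = (\<integral>\<^sup>+\<omega>. time_change_integrand \<alpha> (int s) L F' (\<lambda>i. M i \<omega>) \<partial>\<Omega>)"
    unfolding L_def by (rule time_change_formulaD[OF tc F'[unfolded L_def] F'0])
  also have "\<dots> = (\<integral>\<^sup>+\<omega>. \<integral>\<^sup>+z. G ((\<lambda>i. M i \<omega>)(j + int s := z)) \<partial>K (M (j0 + int s) \<omega>) \<partial>\<Omega>)"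
    unfolding F'_def K_def G_def
    using time_change_integrand_kernel_step[OF \<kappa> j j0[folded L_def] F[folded L_def]] by simp
  also have "\<dots> = (\<integral>\<^sup>+\<omega>. G (\<lambda>i\<in>insert (j + int s) L'. M i \<omega>) \<partial>\<Omega>)"
    using step_shifted G by (simp add: markov_transition_def G_cong K_def L'_def)
  also have "\<dots> = (\<integral>\<^sup>+\<omega>. G (\<lambda>i. M i \<omega>) \<partial>\<Omega>)"
    unfolding G_def by (intro nn_integral_cong time_change_integrand_cong) (auto simp: L_def L'_def)
  finally show ?thesis by (simp add: G_def L_def)
qed

section \<open>Adjoint measures\<close>

lemma measurable_Pair_borel:
  fixes f :: "'a \<Rightarrow> 'b::second_countable_topology" and g :: "'a \<Rightarrow> 'c::second_countable_topology"
  assumes "f \<in> borel_measurable M" and "g \<in> borel_measurable M"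
  shows "(\<lambda>x. (f x, g x)) \<in> borel_measurable M"
  using assms unfolding borel_prod[symmetric] by measurable

lemma measurable_fst_borel [measurable]:
  "fst \<in> (borel :: ('a::second_countable_topology \<times> 'b::second_countable_topology) measure) \<rightarrow>\<^sub>M borel"
  unfolding borel_prod[symmetric] by measurable

lemma measurable_snd_borel [measurable]:
  "snd \<in> (borel :: ('a::second_countable_topology \<times> 'b::second_countable_topology) measure) \<rightarrow>\<^sub>M borel"
  unfolding borel_prod[symmetric] by measurable

lemma in_M_alpha_AE_sphere:
  assumes "in_M_alpha \<alpha> P"
  shows "AE p in P. fst p \<in> sphere (0::'d::euclidean_space) 1"
proof -
  interpret prob_space P using assms by (simp add: in_M_alpha_def)
  have sets: "sets P = sets borel" and one: "emeasure P (sphere 0 1 \<times> UNIV) = 1"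
    using assms by (simp_all add: in_M_alpha_def)
  have S: "sphere (0::'d) 1 \<times> (UNIV::'d set) \<in> sets P"
    unfolding sets by (intro borel_Times) auto
  have "AE p in P. p \<in> sphere (0::'d) 1 \<times> (UNIV::'d set)"
    using AE_in_set_eq_1[OF S] one by (simp add: emeasure_eq_measure)
  then show ?thesis by (rule AE_mp) auto
qed

definition adjoint_map :: "'d \<times> 'd \<Rightarrow> 'd \<times> 'd::real_normed_vector" where
  "adjoint_map p = (snd p /\<^sub>R norm (snd p), fst p /\<^sub>R norm (snd p))"

lemma adjoint_map_measurable [measurable]:
  "adjoint_map \<in> (borel :: ('d::euclidean_space \<times> 'd) measure) \<rightarrow>\<^sub>M borel"
  unfolding adjoint_map_def
  by (intro measurable_Pair_borel) measurable

lemma is_adjoint_nn_integral: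
  fixes P Q :: "('d::euclidean_space \<times> 'd) measure"
  assumes sP: "sets P = sets borel" and sQ: "sets Q = sets borel" and adj: "is_adjoint \<alpha> P Q"
    and \<phi>: "\<phi> \<in> borel_measurable borel"
  shows "(\<integral>\<^sup>+p. \<phi> p * indicator (sphere 0 1 \<times> (UNIV - {0})) p \<partial>Q)
       = (\<integral>\<^sup>+p. indicator (sphere 0 1 \<times> (UNIV - {0})) p * \<phi> (adjoint_map p) * ennreal (norm (snd p) powr \<alpha>) \<partial>P)"
proof -
  define D :: "('d \<times> 'd) set" where "D = sphere 0 1 \<times> (UNIV - {0})"
  define w where "w = (\<lambda>p::'d \<times> 'd. indicator D p * ennreal (norm (snd p) powr \<alpha>))"
  have D[measurable]: "D \<in> sets borel" unfolding D_def by (intro borel_Times) auto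
  have w: "w \<in> borel_measurable P"
    unfolding w_def measurable_cong_sets[OF sP refl] by measurable
  have T: "adjoint_map \<in> density P w \<rightarrow>\<^sub>M borel"
    using sP by (simp add: measurable_cong_sets[of "density P w" borel borel borel])
  have law: "density Q (indicator D) = distr (density P w) borel adjoint_map"
  proof (rule measure_eqI)
    fix E assume "E \<in> sets (density Q (indicator D))"
    then have E: "E \<in> sets borel" by (simp add: sQ)
    have "emeasure (density Q (indicator D)) E = emeasure Q (E \<inter> D)"
      using E D sQ by (subst emeasure_restricted) (auto simp: Int_commute)
    also have "\<dots> = (\<integral>\<^sup>+p. indicator D p * indicator (E \<inter> D) (adjoint_map p)
                  * ennreal (norm (snd p) powr \<alpha>) \<partial>P)"
      using adj E D unfolding is_adjoint_def D_def adjoint_map_def by auto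
    also have "\<dots> = (\<integral>\<^sup>+p. w p * indicator (adjoint_map -` E \<inter> space (density P w)) p \<partial>P)"
      using sets_eq_imp_space_eq[OF sP]
      by (intro nn_integral_cong) (auto simp: w_def D_def adjoint_map_def indicator_def)
    finally show "emeasure (density Q (indicator D)) E = emeasure (distr (density P w) borel adjoint_map) E"
      using E T w by (simp add: emeasure_distr emeasure_density)
  qed (simp add: sQ)
  have "(\<integral>\<^sup>+p. \<phi> p * indicator D p \<partial>Q) = (\<integral>\<^sup>+p. \<phi> p \<partial>density Q (indicator D))"
    using D \<phi> sQ by (simp add: nn_integral_density measurable_cong_sets[OF sQ refl] mult.commute)
  also have "\<dots> = (\<integral>\<^sup>+p. w p * \<phi> (adjoint_map p) \<partial>P)"
    using T w \<phi> sP
    by (simp add: law nn_integral_distr nn_integral_density measurable_cong_sets[OF sP refl])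
  finally show ?thesis by (simp add: D_def w_def mult_ac)
qed

section \<open>Back-and-forth tail chains satisfy the time change formula\<close>

locale tail_chain =
  fixes \<alpha> :: real and \<Omega> :: "'a measure" and M :: "int \<Rightarrow> 'a \<Rightarrow> 'd::euclidean_space"
    and \<kappa>f \<kappa>b :: "'d \<Rightarrow> 'd measure"
  assumes prob_space: "prob_space \<Omega>"
    and M_measurable: "\<And>t. M t \<in> borel_measurable \<Omega>"
    and forward_law: "in_M_alpha \<alpha> (distr \<Omega> borel (\<lambda>\<omega>. (M 0 \<omega>, M 1 \<omega>)))"
    and backward_law: "in_M_alpha \<alpha> (distr \<Omega> borel (\<lambda>\<omega>. (M 0 \<omega>, M (-1) \<omega>)))"
    and adjoint: "is_adjoint \<alpha> (distr \<Omega> borel (\<lambda>\<omega>. (M 0 \<omega>, M 1 \<omega>))) (distr \<Omega> borel (\<lambda>\<omega>. (M 0 \<omega>, M (-1) \<omega>)))"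
    and \<kappa>f_measurable: "\<kappa>f \<in> borel \<rightarrow>\<^sub>M prob_algebra borel"
    and forward_kernel: "\<forall>t::int \<ge> 1. \<forall>B \<in> sets borel. AE \<omega> in \<Omega>.
           real_cond_exp \<Omega> (gen_sigma \<Omega> M {..t - 1}) (\<lambda>\<omega>. indicator B (M t \<omega>)) \<omega>
           = measure (tail_kernel \<kappa>f (M (t - 1) \<omega>)) B"
    and \<kappa>b_measurable: "\<kappa>b \<in> borel \<rightarrow>\<^sub>M prob_algebra borel"
    and backward_kernel: "\<forall>t::int \<ge> 1. \<forall>B \<in> sets borel. AE \<omega> in \<Omega>.
           real_cond_exp \<Omega> (gen_sigma \<Omega> M {-(t - 1)..}) (\<lambda>\<omega>. indicator B (M (-t) \<omega>)) \<omega>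
           = measure (tail_kernel \<kappa>b (M (-t + 1) \<omega>)) B"

lemma back_and_forth_tail_chain_obtain_kernels:
  assumes "prob_space \<Omega>" and "back_and_forth_tail_chain \<alpha> \<Omega> M"
  obtains \<kappa>f \<kappa>b where "tail_chain \<alpha> \<Omega> M \<kappa>f \<kappa>b"
  using assms unfolding back_and_forth_tail_chain_def tail_chain_def cond_law_kernel_def Let_def
  by blast

context tail_chain
begin

lemma markov_transition_forward:
  "0 \<le> t \<Longrightarrow> markov_transition \<Omega> M (tail_kernel \<kappa>f) {a..t} (t + 1) t"
  using forward_kernel[rule_format, of "t + 1"]
  by (intro markov_transitionI[OF prob_space M_measurable, where I="{..t}"]
      tail_kernel_measurable \<kappa>f_measurable) auto

lemma markov_transition_backward:
  "a \<le> 0 \<Longrightarrow> markov_transition \<Omega> M (tail_kernel \<kappa>b) {a..b} (a - 1) a"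
  using backward_kernel[rule_format, of "1 - a"]
  by (intro markov_transitionI[OF prob_space M_measurable, where I="{a..}"]
      tail_kernel_measurable \<kappa>b_measurable) auto

lemma norm_M0_AE: "AE \<omega> in \<Omega>. norm (M 0 \<omega>) = 1"
proof -
  have "(\<lambda>\<omega>. (M 0 \<omega>, M 1 \<omega>)) \<in> \<Omega> \<rightarrow>\<^sub>M (borel :: ('d \<times> 'd) measure)"
    by (intro measurable_Pair_borel M_measurable)
  from AE_distrD[OF this in_M_alpha_AE_sphere[OF forward_law]] show ?thesis by simp
qed

lemma zero_absorbing_AE:
  assumes "0 \<le> T"
  shows "AE \<omega> in \<Omega>. M T \<omega> = 0 \<longrightarrow> M (T + 1) \<omega> = 0"
proof -
  define F where "F = (\<lambda>w::int \<Rightarrow> 'd. indicator {0} (w T) * indicator (- {0}) (w (T + 1)) :: ennreal)"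
  have F: "F \<in> borel_measurable (PiM (insert (T + 1) {T..T}) (\<lambda>_. borel))"
    unfolding F_def by measurable
  have "(\<integral>\<^sup>+\<omega>. F (\<lambda>i\<in>insert (T + 1) {T..T}. M i \<omega>) \<partial>\<Omega>)
      = (\<integral>\<^sup>+\<omega>. \<integral>\<^sup>+y. F ((\<lambda>i\<in>{T..T}. M i \<omega>)(T + 1 := y)) \<partial>tail_kernel \<kappa>f (M T \<omega>) \<partial>\<Omega>)"
    using markov_transition_forward[OF assms, of T] F by (simp add: markov_transition_def)
  also have "\<dots> = 0"
  proof -
    have "(\<integral>\<^sup>+y. F ((\<lambda>i\<in>{T..T}. M i \<omega>)(T + 1 := y)) \<partial>tail_kernel \<kappa>f (M T \<omega>)) = 0" for \<omega>
      by (cases "M T \<omega> = 0") (simp_all add: F_def nn_integral_return)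
    then show ?thesis by simp
  qed
  finally have "AE \<omega> in \<Omega>. F (\<lambda>i\<in>insert (T + 1) {T..T}. M i \<omega>) = 0"
    using measurable_compose[OF measurable_restrict[OF M_measurable] F]
    by (subst nn_integral_0_iff_AE[symmetric]) simp_all
  then show ?thesis by (rule AE_mp) (auto simp: F_def indicator_def)
qed

lemma zero_absorbing_from_one_AE: "AE \<omega> in \<Omega>. M 1 \<omega> = 0 \<longrightarrow> M (1 + int n) \<omega> = 0"
proof (induction n)
  case (Suc n)
  with zero_absorbing_AE[of "1 + int n"] show ?case
    by (auto simp: add.commute add.left_commute)
qed simp

lemma nn_integral_backward_step:
  assumes \<phi>: "\<phi> \<in> borel_measurable borel" and \<phi>0: "\<And>x. \<phi> (x, 0) = 0"
  shows "(\<integral>\<^sup>+\<omega>. \<phi> (M 0 \<omega>, M (-1) \<omega>) \<partial>\<Omega>)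
       = (\<integral>\<^sup>+\<omega>. \<phi> (adjoint_map (M 0 \<omega>, M 1 \<omega>)) * ennreal (norm (M 1 \<omega>) powr \<alpha>)
              * indicator {\<omega>. M 1 \<omega> \<noteq> 0} \<omega> \<partial>\<Omega>)"
proof -
  define P where "P = distr \<Omega> borel (\<lambda>\<omega>. (M 0 \<omega>, M 1 \<omega>))"
  define Q where "Q = distr \<Omega> borel (\<lambda>\<omega>. (M 0 \<omega>, M (-1) \<omega>))"
  define D :: "('d \<times> 'd) set" where "D = sphere 0 1 \<times> (UNIV - {0})"
  have D[measurable]: "D \<in> sets borel" unfolding D_def by (intro borel_Times) auto
  have pm: "(\<lambda>\<omega>. (M 0 \<omega>, M 1 \<omega>)) \<in> \<Omega> \<rightarrow>\<^sub>M (borel :: ('d \<times> 'd) measure)"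
    and qm: "(\<lambda>\<omega>. (M 0 \<omega>, M (-1) \<omega>)) \<in> \<Omega> \<rightarrow>\<^sub>M (borel :: ('d \<times> 'd) measure)"
    by (intro measurable_Pair_borel M_measurable)+
  have "AE p in Q. norm (fst p) = 1"
    using in_M_alpha_AE_sphere[OF backward_law] unfolding Q_def by simp
  then have on_D: "AE p in Q. \<phi> p = \<phi> p * indicator D p"
    by (elim AE_mp) (auto simp: D_def indicator_def \<phi>0)
  have "(\<integral>\<^sup>+\<omega>. \<phi> (M 0 \<omega>, M (-1) \<omega>) \<partial>\<Omega>) = (\<integral>\<^sup>+p. \<phi> p \<partial>Q)"
    using \<phi> by (simp add: Q_def nn_integral_distr[OF qm])
  also have "\<dots> = (\<integral>\<^sup>+p. \<phi> p * indicator D p \<partial>Q)"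
    by (rule nn_integral_cong_AE[OF on_D])
  also have "\<dots> = (\<integral>\<^sup>+p. indicator D p * \<phi> (adjoint_map p) * ennreal (norm (snd p) powr \<alpha>) \<partial>P)"
    unfolding D_def using adjoint \<phi> by (intro is_adjoint_nn_integral) (simp_all add: P_def Q_def)
  also have "\<dots> = (\<integral>\<^sup>+\<omega>. indicator D (M 0 \<omega>, M 1 \<omega>) * \<phi> (adjoint_map (M 0 \<omega>, M 1 \<omega>))
      * ennreal (norm (M 1 \<omega>) powr \<alpha>) \<partial>\<Omega>)"
  proof -
    have "(\<lambda>p. indicator D p * \<phi> (adjoint_map p) * ennreal (norm (snd p) powr \<alpha>)) \<in> borel_measurable borel"
      using \<phi> by measurable
    then show ?thesis unfolding P_def by (simp add: nn_integral_distr[OF pm])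
  qed
  also have "\<dots> = (\<integral>\<^sup>+\<omega>. \<phi> (adjoint_map (M 0 \<omega>, M 1 \<omega>)) * ennreal (norm (M 1 \<omega>) powr \<alpha>)
      * indicator {\<omega>. M 1 \<omega> \<noteq> 0} \<omega> \<partial>\<Omega>)"
    using norm_M0_AE by (intro nn_integral_cong_AE, elim AE_mp) (auto simp: D_def indicator_def)
  finally show ?thesis .
qed

lemma time_change_formula_1_0: "time_change_formula \<alpha> \<Omega> M 1 0"
  unfolding time_change_formula_def
proof (intro allI impI)
  fix F :: "(int \<Rightarrow> 'd) \<Rightarrow> ennreal"
  assume F: "F \<in> borel_measurable (PiM {- int 1..int 0} (\<lambda>_. borel))"
    and F0: "\<forall>y. y (- int 1) = 0 \<longrightarrow> F y = 0"
  define L :: "int set" where "L = {-1..0}"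
  define V where "V = (\<lambda>p::'d \<times> 'd. \<lambda>i\<in>L. if i = 0 then fst p else snd p)"
  have L_iff: "i \<in> L \<longleftrightarrow> i = -1 \<or> i = 0" for i by (auto simp: L_def)
  have "V \<in> borel \<rightarrow>\<^sub>M PiM L (\<lambda>_. borel)"
    unfolding V_def by (intro measurable_restrict) simp
  then have "(\<lambda>p. F (V p)) \<in> borel_measurable borel"
    using F by (simp add: L_def)
  moreover have "F (V (x, 0)) = 0" for x
    using F0 by (simp add: V_def L_def)
  moreover have "(\<lambda>i\<in>L. M i \<omega>) = V (M 0 \<omega>, M (-1) \<omega>)" for \<omega>
    by (auto simp: fun_eq_iff V_def L_iff)
  moreover have "F (V (adjoint_map (M 0 \<omega>, M 1 \<omega>))) * ennreal (norm (M 1 \<omega>) powr \<alpha>)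
      * indicator {\<omega>. M 1 \<omega> \<noteq> 0} \<omega> = time_change_integrand \<alpha> 1 L F (\<lambda>i. M i \<omega>)" for \<omega>
  proof -
    have "V (adjoint_map (M 0 \<omega>, M 1 \<omega>)) = (\<lambda>i\<in>L. M (i + 1) \<omega> /\<^sub>R norm (M 1 \<omega>))"
      by (auto simp: fun_eq_iff V_def L_iff adjoint_map_def)
    then show ?thesis by (simp add: time_change_integrand_def indicator_def)
  qed
  ultimately show "(\<integral>\<^sup>+\<omega>. F (\<lambda>i\<in>{- int 1..int 0}. M i \<omega>) \<partial>\<Omega>)
      = (\<integral>\<^sup>+\<omega>. time_change_integrand \<alpha> (int 1) {- int 1..int 0} F (\<lambda>i. M i \<omega>) \<partial>\<Omega>)"
    using nn_integral_backward_step[of "\<lambda>p. F (V p)"] by (simp add: L_def)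
qed

lemma time_change_formula_Suc_right:
  assumes tc: "time_change_formula \<alpha> \<Omega> M s t"
  shows "time_change_formula \<alpha> \<Omega> M s (Suc t)"
  unfolding time_change_formula_def
proof (intro allI impI)
  fix F :: "(int \<Rightarrow> 'd) \<Rightarrow> ennreal"
  assume F: "F \<in> borel_measurable (PiM {- int s..int (Suc t)} (\<lambda>_. borel))"
    and F0: "\<forall>y. y (- int s) = 0 \<longrightarrow> F y = 0"
  have L: "{- int s..int (Suc t)} = insert (int t + 1) {- int s..int t}" by auto
  have "markov_transition \<Omega> M (tail_kernel \<kappa>f) {0..int s + int t} (int t + 1 + int s) (int t + int s)"
    using markov_transition_forward[of "int s + int t" 0] by (simp add: ac_simps)
  moreover have "markov_transition \<Omega> M (tail_kernel \<kappa>f) {- int s..int t} (int t + 1) (int t)"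
    by (rule markov_transition_forward) simp
  moreover have "(\<integral>\<^sup>+y. F (v(int t + 1 := y)) \<partial>tail_kernel \<kappa>f (v (int t))) = 0"
    if "v (- int s) = 0" for v
  proof -
    have "F (v(int t + 1 := y)) = 0" for y using F0 that by simp
    then show ?thesis by simp
  qed
  ultimately show "(\<integral>\<^sup>+\<omega>. F (\<lambda>i\<in>{- int s..int (Suc t)}. M i \<omega>) \<partial>\<Omega>)
      = (\<integral>\<^sup>+\<omega>. time_change_integrand \<alpha> (int s) {- int s..int (Suc t)} F (\<lambda>i. M i \<omega>) \<partial>\<Omega>)"
    unfolding L using F[unfolded L]
    by (intro time_change_formula_step[OF \<kappa>f_measurable tc]) (simp_all del: fun_upd_apply)
qed

text \<open>Extending to the left uses the backward kernel, which moves the window to time -1;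
  the time change formula on the window from -1 brings it back.\<close>

lemma time_change_formula_Suc_left:
  assumes s: "1 \<le> s" and tc_left: "time_change_formula \<alpha> \<Omega> M s 0"
    and tc_right: "time_change_formula \<alpha> \<Omega> M 1 s"
  shows "time_change_formula \<alpha> \<Omega> M (Suc s) 0"
  unfolding time_change_formula_def
proof (intro allI impI)
  fix F :: "(int \<Rightarrow> 'd) \<Rightarrow> ennreal"
  define L where "L = {- int s - 1..0}"
  define H where "H = time_change_integrand \<alpha> (int s) L F"
  assume F: "F \<in> borel_measurable (PiM {- int (Suc s)..int 0} (\<lambda>_. borel))"
    and F0: "\<forall>y. y (- int (Suc s)) = 0 \<longrightarrow> F y = 0"
  have L: "{- int (Suc s)..int 0} = L" "L = insert (- int s - 1) {- int s..int 0}"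
    by (auto simp: L_def)
  have step: "markov_transition \<Omega> M (tail_kernel \<kappa>b) {- int s..int 0} (- int s - 1) (- int s)"
    using markov_transition_backward[of "- int s" 0] by simp
  have step_shifted: "markov_transition \<Omega> M (tail_kernel \<kappa>b) {0..int s + int 0}
      (- int s - 1 + int s) (- int s + int s)"
    using markov_transition_backward[of 0 "int s"] by simp
  have F0': "(\<integral>\<^sup>+y. F (v(- int s - 1 := y)) \<partial>tail_kernel \<kappa>b (v (- int s))) = 0"
    if "v (- int s) = 0" for v
    using F0 unfolding that by (simp only: nn_integral_tail_kernel_zero) simp
  have "(\<integral>\<^sup>+\<omega>. F (\<lambda>i\<in>L. M i \<omega>) \<partial>\<Omega>) = (\<integral>\<^sup>+\<omega>. H (\<lambda>i. M i \<omega>) \<partial>\<Omega>)"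
    unfolding H_def L(2)
    by (rule time_change_formula_step[OF \<kappa>b_measurable tc_left _ _ step step_shifted
          F[unfolded L] F0']) simp_all
  also have "\<dots> = (\<integral>\<^sup>+\<omega>. H (\<lambda>i\<in>{- int 1..int s}. M i \<omega>) \<partial>\<Omega>)"
    using s unfolding H_def by (intro nn_integral_cong time_change_integrand_cong) (auto simp: L_def)
  also have "\<dots> = (\<integral>\<^sup>+\<omega>. time_change_integrand \<alpha> 1 {- 1..int s} H (\<lambda>i. M i \<omega>) \<partial>\<Omega>)"
  proof -
    have "H \<in> borel_measurable (PiM {- int 1..int s} (\<lambda>_. borel))"
      unfolding H_def using s by (intro measurable_time_change_integrand[OF F[unfolded L(1)]]) (auto simp: L_def)
    moreover have "H y = 0" if "y (- int 1) = 0" for y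
      using F0 that by (simp add: H_def time_change_integrand_def L_def)
    ultimately show ?thesis using time_change_formulaD[OF tc_right, of H] by simp
  qed
  also have "\<dots> = (\<integral>\<^sup>+\<omega>. time_change_integrand \<alpha> (int (Suc s)) L F (\<lambda>i. M i \<omega>) \<partial>\<Omega>)"
    using zero_absorbing_from_one_AE[of s] s unfolding H_def
    by (intro nn_integral_cong_AE, elim AE_mp)
      (auto intro!: time_change_integrand_compose[THEN trans] simp: L_def add.commute)
  finally show "(\<integral>\<^sup>+\<omega>. F (\<lambda>i\<in>{- int (Suc s)..int 0}. M i \<omega>) \<partial>\<Omega>)
      = (\<integral>\<^sup>+\<omega>. time_change_integrand \<alpha> (int (Suc s)) {- int (Suc s)..int 0} F (\<lambda>i. M i \<omega>) \<partial>\<Omega>)"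
    unfolding L(1) .
qed

lemma time_change_formula_positive: "1 \<le> s \<Longrightarrow> time_change_formula \<alpha> \<Omega> M s t"
proof -
  have right: "time_change_formula \<alpha> \<Omega> M 1 t" for t
  proof (induction t)
    case 0 show ?case by (rule time_change_formula_1_0)
  qed (rule time_change_formula_Suc_right)
  have left: "time_change_formula \<alpha> \<Omega> M s 0" if "1 \<le> s" for s
    using that
  proof (induction s rule: nat_induct_at_least)
    case base show ?case by (rule time_change_formula_1_0)
  next
    case (Suc s) then show ?case by (intro time_change_formula_Suc_left right)
  qed
  show "1 \<le> s \<Longrightarrow> ?thesis"
  proof (induction t)
    case 0 then show ?case by (rule left)
  qed (rule time_change_formula_Suc_right)
qed

end


section \<open>Identification of the laws\<close>

lemma nn_integral_time_change_integrand_eq: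
  fixes X :: "int \<Rightarrow> 'a \<Rightarrow> 'd::euclidean_space" and Z :: "int \<Rightarrow> 'b \<Rightarrow> 'd"
  assumes Xm: "\<And>i. X i \<in> borel_measurable \<Omega>\<^sub>X" and Zm: "\<And>i. Z i \<in> borel_measurable \<Omega>\<^sub>Z"
    and law: "distr \<Omega>\<^sub>X (PiM K (\<lambda>_. borel)) (\<lambda>\<omega>. \<lambda>i\<in>K. X i \<omega>)
            = distr \<Omega>\<^sub>Z (PiM K (\<lambda>_. borel)) (\<lambda>\<omega>. \<lambda>i\<in>K. Z i \<omega>)"
    and F: "F \<in> borel_measurable (PiM L (\<lambda>_. borel))" and K: "c \<in> K" "\<And>i. i \<in> L \<Longrightarrow> i + c \<in> K"
  shows "(\<integral>\<^sup>+\<omega>. time_change_integrand \<alpha> c L F (\<lambda>i. X i \<omega>) \<partial>\<Omega>\<^sub>X)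
       = (\<integral>\<^sup>+\<omega>. time_change_integrand \<alpha> c L F (\<lambda>i. Z i \<omega>) \<partial>\<Omega>\<^sub>Z)"
proof -
  define G where "G = time_change_integrand \<alpha> c L F"
  have G: "G \<in> borel_measurable (PiM K (\<lambda>_. borel))"
    unfolding G_def using F K by (rule measurable_time_change_integrand)
  have restrict: "G (\<lambda>i. W i \<omega>) = G (\<lambda>i\<in>K. W i \<omega>)" for W :: "int \<Rightarrow> 'c \<Rightarrow> 'd" and \<omega>
    unfolding G_def using K by (intro time_change_integrand_cong) auto
  have WX: "(\<lambda>\<omega>. \<lambda>i\<in>K. X i \<omega>) \<in> \<Omega>\<^sub>X \<rightarrow>\<^sub>M PiM K (\<lambda>_. borel)"
    and WZ: "(\<lambda>\<omega>. \<lambda>i\<in>K. Z i \<omega>) \<in> \<Omega>\<^sub>Z \<rightarrow>\<^sub>M PiM K (\<lambda>_. borel)"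
    by (intro measurable_restrict Xm Zm)+
  have "(\<integral>\<^sup>+\<omega>. G (\<lambda>i\<in>K. X i \<omega>) \<partial>\<Omega>\<^sub>X) = (\<integral>\<^sup>+w. G w \<partial>distr \<Omega>\<^sub>X (PiM K (\<lambda>_. borel)) (\<lambda>\<omega>. \<lambda>i\<in>K. X i \<omega>))"
    using G by (simp add: nn_integral_distr[OF WX])
  also have "\<dots> = (\<integral>\<^sup>+\<omega>. G (\<lambda>i\<in>K. Z i \<omega>) \<partial>\<Omega>\<^sub>Z)"
    unfolding law using G by (simp add: nn_integral_distr[OF WZ])
  finally show ?thesis unfolding G_def[symmetric] restrict .
qed

lemma emeasure_Int_Diff_split:
  assumes "A \<in> sets M" and "B \<in> sets M"
  shows "emeasure M A = emeasure M (A \<inter> B) + emeasure M (A - B)"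
proof -
  have "A \<inter> B \<inter> (A - B) = {}" and "A \<inter> B \<union> (A - B) = A" by blast+
  with assms show ?thesis by (metis plus_emeasure sets.Int sets.Diff)
qed

lemma measurable_fun_upd_const_PiM:
  "(\<lambda>v. v(a := c)) \<in> PiM L (\<lambda>_. borel) \<rightarrow>\<^sub>M PiM (insert a L) (\<lambda>_. (borel::'d::topological_space measure))"
  using measurable_compose[OF measurable_Pair[OF measurable_ident_sets[OF refl]
      measurable_const[of c borel]] measurable_fun_upd_PiM[where L=L and j=a]]
  by simp

lemma distr_window_reset:
  fixes W :: "int \<Rightarrow> 'a \<Rightarrow> 'd::euclidean_space"
  assumes W: "\<And>i. W i \<in> borel_measurable \<Omega>"
  shows "distr (distr \<Omega> (PiM (insert a L) (\<lambda>_. borel)) (\<lambda>\<omega>. \<lambda>i\<in>insert a L. W i \<omega>))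
           (PiM (insert a L) (\<lambda>_. borel)) (\<lambda>w. (restrict w L)(a := c))
       = distr (distr \<Omega> (PiM L (\<lambda>_. borel)) (\<lambda>\<omega>. \<lambda>i\<in>L. W i \<omega>)) (PiM (insert a L) (\<lambda>_. borel)) (\<lambda>v. v(a := c))"
proof -
  have WK: "(\<lambda>\<omega>. \<lambda>i\<in>insert a L. W i \<omega>) \<in> \<Omega> \<rightarrow>\<^sub>M PiM (insert a L) (\<lambda>_. borel)"
    and WL: "(\<lambda>\<omega>. \<lambda>i\<in>L. W i \<omega>) \<in> \<Omega> \<rightarrow>\<^sub>M PiM L (\<lambda>_. borel)"
    by (intro measurable_restrict W)+
  have reset: "(\<lambda>w. (restrict w L)(a := c)) \<in> PiM (insert a L) (\<lambda>_. borel) \<rightarrow>\<^sub>M PiM (insert a L) (\<lambda>_. borel)"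
    using measurable_compose[OF measurable_restrict_subset measurable_fun_upd_const_PiM] by auto
  have "(\<lambda>w. (restrict w L)(a := c)) \<circ> (\<lambda>\<omega>. \<lambda>i\<in>insert a L. W i \<omega>) = (\<lambda>v. v(a := c)) \<circ> (\<lambda>\<omega>. \<lambda>i\<in>L. W i \<omega>)"
    by (auto simp: fun_eq_iff)
  then show ?thesis
    by (simp add: distr_distr[OF reset WK] distr_distr[OF measurable_fun_upd_const_PiM WL])
qed

text \<open>The event {w a = 0} is handled through the marginal on L: on it, resetting
  coordinate a to 0 is the identity.\<close>

lemma distr_window_insert_eqI:
  fixes X :: "int \<Rightarrow> 'a \<Rightarrow> 'd::euclidean_space" and Z :: "int \<Rightarrow> 'b \<Rightarrow> 'd"
  assumes "prob_space \<Omega>\<^sub>X" and Xm: "\<And>i. X i \<in> borel_measurable \<Omega>\<^sub>X" and Zm: "\<And>i. Z i \<in> borel_measurable \<Omega>\<^sub>Z"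
    and marginal: "distr \<Omega>\<^sub>X (PiM L (\<lambda>_. borel)) (\<lambda>\<omega>. \<lambda>i\<in>L. X i \<omega>)
                 = distr \<Omega>\<^sub>Z (PiM L (\<lambda>_. borel)) (\<lambda>\<omega>. \<lambda>i\<in>L. Z i \<omega>)"
    and nonzero: "\<And>B. B \<in> sets (PiM (insert a L) (\<lambda>_. borel)) \<Longrightarrow> (\<And>w. w \<in> B \<Longrightarrow> w a \<noteq> 0) \<Longrightarrow>
        emeasure (distr \<Omega>\<^sub>X (PiM (insert a L) (\<lambda>_. borel)) (\<lambda>\<omega>. \<lambda>i\<in>insert a L. X i \<omega>)) B
        = emeasure (distr \<Omega>\<^sub>Z (PiM (insert a L) (\<lambda>_. borel)) (\<lambda>\<omega>. \<lambda>i\<in>insert a L. Z i \<omega>)) B"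
  shows "distr \<Omega>\<^sub>X (PiM (insert a L) (\<lambda>_. borel)) (\<lambda>\<omega>. \<lambda>i\<in>insert a L. X i \<omega>)
       = distr \<Omega>\<^sub>Z (PiM (insert a L) (\<lambda>_. borel)) (\<lambda>\<omega>. \<lambda>i\<in>insert a L. Z i \<omega>)"
    (is "?\<mu> = ?\<nu>")
proof (rule measure_eqI)
  fix A assume "A \<in> sets ?\<mu>"
  then have A: "A \<in> sets (PiM (insert a L) (\<lambda>_. borel))" by simp
  define N where "N = {w \<in> space (PiM (insert a L) (\<lambda>_. borel)). w a \<noteq> (0::'d)}"
  define \<Phi> where "\<Phi> = (\<lambda>w::int \<Rightarrow> 'd. (restrict w L)(a := 0))"
  define R where "R = \<Phi> -` A \<inter> space (PiM (insert a L) (\<lambda>_. borel))"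
  have N: "N \<in> sets ?\<mu>" "N \<in> sets ?\<nu>"
    unfolding N_def by measurable
  have \<Phi>: "\<Phi> \<in> PiM (insert a L) (\<lambda>_. borel) \<rightarrow>\<^sub>M PiM (insert a L) (\<lambda>_. borel)"
    unfolding \<Phi>_def using measurable_compose[OF measurable_restrict_subset measurable_fun_upd_const_PiM] by auto
  have R: "R \<in> sets ?\<mu>" "R \<in> sets ?\<nu>"
    unfolding R_def using measurable_sets[OF \<Phi> A] by simp_all
  have "\<Phi> w = w" if "w \<in> space (PiM (insert a L) (\<lambda>_. borel))" "w a = 0" for w
    using that by (auto simp: \<Phi>_def space_PiM PiE_def extensional_def fun_eq_iff)
  then have AR: "A - N = R - N"
    using sets.sets_into_space[OF A] by (auto simp: R_def N_def)
  have nz: "emeasure ?\<mu> (B \<inter> N) = emeasure ?\<nu> (B \<inter> N)" if "B \<in> sets (PiM (insert a L) (\<lambda>_. borel))" for B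
    using that N by (intro nonzero) (auto simp: N_def)
  have preimage: "emeasure M R = emeasure (distr M (PiM (insert a L) (\<lambda>_. borel)) \<Phi>) A"
    if "sets M = sets (PiM (insert a L) (\<lambda>_. borel))" for M
  proof -
    have "\<Phi> \<in> M \<rightarrow>\<^sub>M PiM (insert a L) (\<lambda>_. borel)"
      unfolding measurable_cong_sets[OF that refl] by (rule \<Phi>)
    then show ?thesis using A sets_eq_imp_space_eq[OF that] by (simp add: emeasure_distr R_def)
  qed
  have "emeasure ?\<mu> R = emeasure ?\<nu> R"
    unfolding preimage[OF sets_distr] \<Phi>_def distr_window_reset[OF Xm] distr_window_reset[OF Zm] marginal ..
  then have "emeasure ?\<nu> (R \<inter> N) + emeasure ?\<mu> (R - N) = emeasure ?\<nu> (R \<inter> N) + emeasure ?\<nu> (R - N)"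
    using emeasure_Int_Diff_split[OF R(1) N(1)] emeasure_Int_Diff_split[OF R(2) N(2)] nz R by simp
  moreover have "emeasure ?\<nu> (R \<inter> N) \<noteq> \<top>"
  proof -
    interpret \<mu>: prob_space ?\<mu>
      by (intro prob_space.prob_space_distr[OF \<open>prob_space \<Omega>\<^sub>X\<close>] measurable_restrict Xm)
    have "emeasure ?\<mu> (R \<inter> N) \<noteq> \<top>" by (simp add: \<mu>.emeasure_eq_measure)
    moreover have "R \<in> sets (PiM (insert a L) (\<lambda>_. borel))" using R by simp
    ultimately show ?thesis using nz by metis
  qed
  ultimately have "emeasure ?\<mu> (A - N) = emeasure ?\<nu> (A - N)"
    unfolding AR by (simp add: ennreal_add_left_cancel)
  then show "emeasure ?\<mu> A = emeasure ?\<nu> A"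
    using emeasure_Int_Diff_split[of A ?\<mu> N] emeasure_Int_Diff_split[of A ?\<nu> N] A N nz[OF A] by simp
qed simp

lemma emeasure_distr_eq_nn_integral_indicator:
  assumes "W \<in> \<Omega> \<rightarrow>\<^sub>M N" and "B \<in> sets N"
  shows "emeasure (distr \<Omega> N W) B = (\<integral>\<^sup>+\<omega>. indicator B (W \<omega>) \<partial>\<Omega>)"
proof -
  have "emeasure (distr \<Omega> N W) B = (\<integral>\<^sup>+x. indicator B x \<partial>distr \<Omega> N W)"
    using assms by simp
  also have "\<dots> = (\<integral>\<^sup>+\<omega>. indicator B (W \<omega>) \<partial>\<Omega>)"
    using assms by (intro nn_integral_distr) simp_all
  finally show ?thesis .
qed

lemma emeasure_window_time_change:
  fixes Y :: "int \<Rightarrow> 'a \<Rightarrow> 'd::euclidean_space" and S t :: nat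
  assumes "prob_space \<Omega>" and Ym: "\<And>i. Y i \<in> borel_measurable \<Omega>"
    and time_change: "\<And>f :: (int \<Rightarrow> 'd) \<Rightarrow> real.
           f \<in> borel_measurable (PiM {- int S..int t} (\<lambda>_. borel)) \<Longrightarrow>
           bounded (f ` space (PiM {- int S..int t} (\<lambda>_. (borel :: 'd measure)))) \<Longrightarrow>
           (\<forall>y \<in> space (PiM {- int S..int t} (\<lambda>_. (borel :: 'd measure))). y (- int S) = 0 \<longrightarrow> f y = 0) \<Longrightarrow>
           (\<integral>\<omega>. f (\<lambda>i\<in>{- int S..int t}. Y i \<omega>) \<partial>\<Omega>)
           = (\<integral>\<omega>. f (\<lambda>i\<in>{- int S..int t}. Y (i + int S) \<omega> /\<^sub>R norm (Y (int S) \<omega>))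
                   * norm (Y (int S) \<omega>) powr \<alpha> * indicator {\<omega>. Y (int S) \<omega> \<noteq> 0} \<omega> \<partial>\<Omega>)"
    and B: "B \<in> sets (PiM {- int S..int t} (\<lambda>_. borel))" and B0: "\<And>w. w \<in> B \<Longrightarrow> w (- int S) \<noteq> 0"
    and finite: "(\<integral>\<^sup>+\<omega>. time_change_integrand \<alpha> (int S) {- int S..int t} (indicator B) (\<lambda>i. Y i \<omega>) \<partial>\<Omega>) \<noteq> \<top>"
  shows "emeasure (distr \<Omega> (PiM {- int S..int t} (\<lambda>_. borel)) (\<lambda>\<omega>. \<lambda>i\<in>{- int S..int t}. Y i \<omega>)) B
       = (\<integral>\<^sup>+\<omega>. time_change_integrand \<alpha> (int S) {- int S..int t} (indicator B) (\<lambda>i. Y i \<omega>) \<partial>\<Omega>)"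
proof -
  interpret prob_space \<Omega> by fact
  define L where "L = {- int S..int t}"
  define g where "g = (\<lambda>\<omega>. indicator B (\<lambda>i\<in>L. Y (i + int S) \<omega> /\<^sub>R norm (Y (int S) \<omega>))
      * norm (Y (int S) \<omega>) powr \<alpha> * indicator {\<omega>. Y (int S) \<omega> \<noteq> 0} \<omega> :: real)"
  have BL[measurable]: "B \<in> sets (PiM L (\<lambda>_. borel))" using B by (simp add: L_def)
  have W: "(\<lambda>\<omega>. \<lambda>i\<in>L. Y i \<omega>) \<in> \<Omega> \<rightarrow>\<^sub>M PiM L (\<lambda>_. borel)"
    by (intro measurable_restrict Ym)
  have g_eq: "ennreal (g \<omega>) = time_change_integrand \<alpha> (int S) L (indicator B) (\<lambda>i. Y i \<omega>)" for \<omega>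
    by (simp add: g_def time_change_integrand_def split: split_indicator)
  have "(\<lambda>\<omega>. \<lambda>i\<in>L. Y (i + int S) \<omega> /\<^sub>R norm (Y (int S) \<omega>)) \<in> \<Omega> \<rightarrow>\<^sub>M PiM L (\<lambda>_. borel)"
    using Ym by (intro measurable_restrict) measurable
  then have "g \<in> borel_measurable \<Omega>"
    unfolding g_def using Ym by measurable
  moreover have "(\<integral>\<^sup>+\<omega>. ennreal (g \<omega>) \<partial>\<Omega>) < \<top>"
    using finite by (simp add: g_eq L_def less_top)
  ultimately have g: "integrable \<Omega> g"
    by (intro integrableI_nonneg) (auto simp: g_def)
  have "integrable \<Omega> (\<lambda>\<omega>. indicator B (\<lambda>i\<in>L. Y i \<omega>) :: real)"
    using measurable_compose[OF W borel_measurable_indicator[OF BL]]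
    by (intro integrable_const_bound[where B=1]) auto
  then have "emeasure (distr \<Omega> (PiM L (\<lambda>_. borel)) (\<lambda>\<omega>. \<lambda>i\<in>L. Y i \<omega>)) B
      = ennreal (\<integral>\<omega>. indicator B (\<lambda>i\<in>L. Y i \<omega>) \<partial>\<Omega>)"
    by (simp add: emeasure_distr_eq_nn_integral_indicator[OF W BL] nn_integral_eq_integral
        flip: ennreal_indicator)
  also have "(\<integral>\<omega>. indicator B (\<lambda>i\<in>L. Y i \<omega>) \<partial>\<Omega>) = (\<integral>\<omega>. g \<omega> \<partial>\<Omega>)"
  proof -
    have "bounded (indicator B ` space (PiM {- int S..int t} (\<lambda>_. borel)) :: real set)"
      by (rule bounded_subset[of "{0, 1}"]) (auto simp: indicator_def)
    moreover have "\<forall>y \<in> space (PiM {- int S..int t} (\<lambda>_. borel)). y (- int S) = 0 \<longrightarrow> (indicator B y :: real) = 0"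
      using B0 by (auto simp: indicator_def)
    ultimately show ?thesis
      unfolding g_def L_def using time_change B by simp
  qed
  also have "ennreal \<dots> = (\<integral>\<^sup>+\<omega>. ennreal (g \<omega>) \<partial>\<Omega>)"
    by (rule nn_integral_eq_integral[symmetric, OF g]) (simp add: g_def)
  also have "\<dots> = (\<integral>\<^sup>+\<omega>. time_change_integrand \<alpha> (int S) L (indicator B) (\<lambda>i. Y i \<omega>) \<partial>\<Omega>)"
    by (simp only: g_eq)
  finally show ?thesis unfolding L_def .
qed

lemma (in tail_chain) emeasure_window_eq_nn_integral_time_change:
  fixes Y :: "int \<Rightarrow> 'b \<Rightarrow> 'd" and S t :: nat
  assumes Ym: "\<And>i. Y i \<in> borel_measurable \<Omega>\<^sub>Y"
    and law_right: "distr \<Omega>\<^sub>Y (PiM {0..int (S + t)} (\<lambda>_. borel)) (\<lambda>\<omega>. \<lambda>i\<in>{0..int (S + t)}. Y i \<omega>)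
                  = distr \<Omega> (PiM {0..int (S + t)} (\<lambda>_. borel)) (\<lambda>\<omega>. \<lambda>i\<in>{0..int (S + t)}. M i \<omega>)"
    and S: "1 \<le> S" and B: "B \<in> sets (PiM {- int S..int t} (\<lambda>_. borel))"
    and B0: "\<And>w. w \<in> B \<Longrightarrow> w (- int S) \<noteq> 0"
  shows "emeasure (distr \<Omega> (PiM {- int S..int t} (\<lambda>_. borel)) (\<lambda>\<omega>. \<lambda>i\<in>{- int S..int t}. M i \<omega>)) B
       = (\<integral>\<^sup>+\<omega>. time_change_integrand \<alpha> (int S) {- int S..int t} (indicator B) (\<lambda>i. Y i \<omega>) \<partial>\<Omega>\<^sub>Y)"
proof -
  have "emeasure (distr \<Omega> (PiM {- int S..int t} (\<lambda>_. borel)) (\<lambda>\<omega>. \<lambda>i\<in>{- int S..int t}. M i \<omega>)) B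
      = (\<integral>\<^sup>+\<omega>. indicator B (\<lambda>i\<in>{- int S..int t}. M i \<omega>) \<partial>\<Omega>)"
    using B by (intro emeasure_distr_eq_nn_integral_indicator measurable_restrict M_measurable)
  also have "\<dots> = (\<integral>\<^sup>+\<omega>. time_change_integrand \<alpha> (int S) {- int S..int t} (indicator B) (\<lambda>i. M i \<omega>) \<partial>\<Omega>)"
    using B B0 by (intro time_change_formulaD[OF time_change_formula_positive[OF S]])
      (auto simp: indicator_def)
  also have "\<dots> = (\<integral>\<^sup>+\<omega>. time_change_integrand \<alpha> (int S) {- int S..int t} (indicator B) (\<lambda>i. Y i \<omega>) \<partial>\<Omega>\<^sub>Y)"
    using law_right B
    by (intro nn_integral_time_change_integrand_eq[symmetric] Ym M_measurable) auto
  finally show ?thesis .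
qed

lemma (in tail_chain) emeasure_window_eq_if_nonzero_start:
  fixes Y :: "int \<Rightarrow> 'b \<Rightarrow> 'd" and S t :: nat
  assumes "prob_space \<Omega>\<^sub>Y" and Ym: "\<And>i. Y i \<in> borel_measurable \<Omega>\<^sub>Y"
    and law_right: "distr \<Omega>\<^sub>Y (PiM {0..int (S + t)} (\<lambda>_. borel)) (\<lambda>\<omega>. \<lambda>i\<in>{0..int (S + t)}. Y i \<omega>)
                  = distr \<Omega> (PiM {0..int (S + t)} (\<lambda>_. borel)) (\<lambda>\<omega>. \<lambda>i\<in>{0..int (S + t)}. M i \<omega>)"
    and time_change_Y: "\<And>f :: (int \<Rightarrow> 'd) \<Rightarrow> real.
           f \<in> borel_measurable (PiM {- int S..int t} (\<lambda>_. borel)) \<Longrightarrow>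
           bounded (f ` space (PiM {- int S..int t} (\<lambda>_. (borel :: 'd measure)))) \<Longrightarrow>
           (\<forall>y \<in> space (PiM {- int S..int t} (\<lambda>_. (borel :: 'd measure))). y (- int S) = 0 \<longrightarrow> f y = 0) \<Longrightarrow>
           (\<integral>\<omega>. f (\<lambda>i\<in>{- int S..int t}. Y i \<omega>) \<partial>\<Omega>\<^sub>Y)
           = (\<integral>\<omega>. f (\<lambda>i\<in>{- int S..int t}. Y (i + int S) \<omega> /\<^sub>R norm (Y (int S) \<omega>))
                   * norm (Y (int S) \<omega>) powr \<alpha> * indicator {\<omega>. Y (int S) \<omega> \<noteq> 0} \<omega> \<partial>\<Omega>\<^sub>Y)"
    and S: "1 \<le> S" and B: "B \<in> sets (PiM {- int S..int t} (\<lambda>_. borel))"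
    and B0: "\<And>w. w \<in> B \<Longrightarrow> w (- int S) \<noteq> 0"
  shows "emeasure (distr \<Omega>\<^sub>Y (PiM {- int S..int t} (\<lambda>_. borel)) (\<lambda>\<omega>. \<lambda>i\<in>{- int S..int t}. Y i \<omega>)) B
       = emeasure (distr \<Omega> (PiM {- int S..int t} (\<lambda>_. borel)) (\<lambda>\<omega>. \<lambda>i\<in>{- int S..int t}. M i \<omega>)) B"
proof -
  interpret law_M: prob_space "distr \<Omega> (PiM {- int S..int t} (\<lambda>_. borel)) (\<lambda>\<omega>. \<lambda>i\<in>{- int S..int t}. M i \<omega>)"
    by (intro prob_space.prob_space_distr[OF prob_space] measurable_restrict M_measurable)
  have time_change_M:
    "emeasure (distr \<Omega> (PiM {- int S..int t} (\<lambda>_. borel)) (\<lambda>\<omega>. \<lambda>i\<in>{- int S..int t}. M i \<omega>)) B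
     = (\<integral>\<^sup>+\<omega>. time_change_integrand \<alpha> (int S) {- int S..int t} (indicator B) (\<lambda>i. Y i \<omega>) \<partial>\<Omega>\<^sub>Y)"
    using law_right S B B0 by (intro emeasure_window_eq_nn_integral_time_change Ym)
  have "(\<integral>\<^sup>+\<omega>. time_change_integrand \<alpha> (int S) {- int S..int t} (indicator B) (\<lambda>i. Y i \<omega>) \<partial>\<Omega>\<^sub>Y) \<noteq> \<top>"
    unfolding time_change_M[symmetric] by (rule law_M.emeasure_finite)
  then show ?thesis
    unfolding time_change_M using B B0
    by (intro emeasure_window_time_change[where S=S and t=t] assms(1) Ym time_change_Y)
qed

theorem proposition5p3:
  fixes \<alpha> :: real
    and \<Omega>\<^sub>Y :: "'a measure" and Y :: "int \<Rightarrow> 'a \<Rightarrow> 'd::euclidean_space"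
    and \<Omega>\<^sub>M :: "'b measure" and M :: "int \<Rightarrow> 'b \<Rightarrow> 'd"
  assumes "\<alpha> > 0"
    and "prob_space \<Omega>\<^sub>Y" and "\<And>t. Y t \<in> borel_measurable \<Omega>\<^sub>Y"
    and "prob_space \<Omega>\<^sub>M" and "back_and_forth_tail_chain \<alpha> \<Omega>\<^sub>M M"
    and "\<And>t::nat. distr \<Omega>\<^sub>Y (PiM {0..int t} (\<lambda>_. borel)) (\<lambda>\<omega>. \<lambda>i\<in>{0..int t}. Y i \<omega>)
                 = distr \<Omega>\<^sub>M (PiM {0..int t} (\<lambda>_. borel)) (\<lambda>\<omega>. \<lambda>i\<in>{0..int t}. M i \<omega>)"
    and "\<And>(s::nat) (t::nat) (f :: (int \<Rightarrow> 'd) \<Rightarrow> real).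
           f \<in> borel_measurable (PiM {- int s..int t} (\<lambda>_. borel)) \<Longrightarrow>
           bounded (f ` space (PiM {- int s..int t} (\<lambda>_. (borel :: 'd measure)))) \<Longrightarrow>
           (\<forall>y \<in> space (PiM {- int s..int t} (\<lambda>_. (borel :: 'd measure))). y (- int s) = 0 \<longrightarrow> f y = 0) \<Longrightarrow>
           (\<integral>\<omega>. f (\<lambda>i\<in>{- int s..int t}. Y i \<omega>) \<partial>\<Omega>\<^sub>Y)
           = (\<integral>\<omega>. f (\<lambda>i\<in>{- int s..int t}. Y (i + int s) \<omega> /\<^sub>R norm (Y (int s) \<omega>))
                   * norm (Y (int s) \<omega>) powr \<alpha> * indicator {\<omega>. Y (int s) \<omega> \<noteq> 0} \<omega> \<partial>\<Omega>\<^sub>Y)"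
  shows "\<forall>s t::nat.
           distr \<Omega>\<^sub>Y (PiM {- int s..int t} (\<lambda>_. borel)) (\<lambda>\<omega>. \<lambda>i\<in>{- int s..int t}. Y i \<omega>)
           = distr \<Omega>\<^sub>M (PiM {- int s..int t} (\<lambda>_. borel)) (\<lambda>\<omega>. \<lambda>i\<in>{- int s..int t}. M i \<omega>)"
proof (intro allI)
  fix s t :: nat
  obtain \<kappa>f \<kappa>b where "tail_chain \<alpha> \<Omega>\<^sub>M M \<kappa>f \<kappa>b"
    using back_and_forth_tail_chain_obtain_kernels[OF assms(4,5)] .
  then interpret tail_chain \<alpha> \<Omega>\<^sub>M M \<kappa>f \<kappa>b .
  show "distr \<Omega>\<^sub>Y (PiM {- int s..int t} (\<lambda>_. borel)) (\<lambda>\<omega>. \<lambda>i\<in>{- int s..int t}. Y i \<omega>)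
      = distr \<Omega>\<^sub>M (PiM {- int s..int t} (\<lambda>_. borel)) (\<lambda>\<omega>. \<lambda>i\<in>{- int s..int t}. M i \<omega>)"
  proof (induction s)
    case 0
    show ?case using assms(6)[of t] by (simp only: of_nat_0 minus_zero)
  next
    case (Suc s)
    have window: "{- int (Suc s)..int t} = insert (- int (Suc s)) {- int s..int t}" by auto
    have "emeasure (distr \<Omega>\<^sub>Y (PiM {- int (Suc s)..int t} (\<lambda>_. borel)) (\<lambda>\<omega>. \<lambda>i\<in>{- int (Suc s)..int t}. Y i \<omega>)) B
        = emeasure (distr \<Omega>\<^sub>M (PiM {- int (Suc s)..int t} (\<lambda>_. borel)) (\<lambda>\<omega>. \<lambda>i\<in>{- int (Suc s)..int t}. M i \<omega>)) B"
      if "B \<in> sets (PiM {- int (Suc s)..int t} (\<lambda>_. borel))" "\<And>w. w \<in> B \<Longrightarrow> w (- int (Suc s)) \<noteq> 0" for B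
      using that by (intro emeasure_window_eq_if_nonzero_start[where S="Suc s" and t=t] assms(2,3,6,7)) auto
    then show ?case
      unfolding window by (intro distr_window_insert_eqI[OF assms(2,3) M_measurable Suc.IH]) auto
  qed
qed

end
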